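(* Let $\Omega\subset\mathbb{R}^2$ be a domain and $u\in C^{2}(\Omega)$. Let $S(u)=\{(x,y)\in\Omega:u_x-y=0,\ u_y+x=0\}$, on $\Omega\setminus S(u)$ let $N(u)=(u_x-y,u_y+x)/\sqrt{(u_x-y)^2+(u_y+x)^2}$ and $H=\operatorname{div}N(u)$. Let $$U=\begin{pmatrix}u_{xx}&u_{xy}-1\\ u_{xy}+1&u_{yy}\end{pmatrix}.$$ Let $p_0\in S(u)$ and suppose there are a constant $C>0$ and a neighborhood of $p_0$ on which $|H(p)|\le C/r(p)$ for $p\notin S(u)$, where $r(p)=|p-p_0|$. Then the following are equivalent: (1) $p_0$ is not isolated in $S(u)$; (2) $\det U(p_0)=0$; (3) there exists a small neighborhood of $p_0$ which intersects $S(u)$ in exactly a $C^{1}$ smooth curve passing through $p_0$.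
   Context: $\operatorname{div}$ is the Euclidean divergence in the $xy$-plane. *)

theory Defs
  imports "HOL-Analysis.Analysis"
begin

definition px :: "(real \<times> real \<Rightarrow> real) \<Rightarrow> real \<times> real \<Rightarrow> real" where
  "px f p = deriv (\<lambda>t. f (t, snd p)) (fst p)"

definition py :: "(real \<times> real \<Rightarrow> real) \<Rightarrow> real \<times> real \<Rightarrow> real" where
  "py f p = deriv (\<lambda>t. f (fst p, t)) (snd p)"

definition has_px :: "(real \<times> real \<Rightarrow> real) \<Rightarrow> real \<times> real \<Rightarrow> bool" where
  "has_px f p \<longleftrightarrow> (\<lambda>t. f (t, snd p)) differentiable (at (fst p))"

definition has_py :: "(real \<times> real \<Rightarrow> real) \<Rightarrow> real \<times> real \<Rightarrow> bool" where
  "has_py f p \<longleftrightarrow> (\<lambda>t. f (fst p, t)) differentiable (at (snd p))"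

definition C2_on :: "(real \<times> real) set \<Rightarrow> (real \<times> real \<Rightarrow> real) \<Rightarrow> bool" where
  "C2_on \<Omega> u \<longleftrightarrow>
     (\<forall>p\<in>\<Omega>. has_px u p \<and> has_py u p \<and>
              has_px (px u) p \<and> has_py (px u) p \<and> has_px (py u) p \<and> has_py (py u) p) \<and>
     continuous_on \<Omega> u \<and> continuous_on \<Omega> (px u) \<and> continuous_on \<Omega> (py u) \<and>
     continuous_on \<Omega> (px (px u)) \<and> continuous_on \<Omega> (py (px u)) \<and>
     continuous_on \<Omega> (px (py u)) \<and> continuous_on \<Omega> (py (py u))"

definition sing_set :: "(real \<times> real) set \<Rightarrow> (real \<times> real \<Rightarrow> real) \<Rightarrow> (real \<times> real) set" where
  "sing_set \<Omega> u = {p\<in>\<Omega>. px u p - snd p = 0 \<and> py u p + fst p = 0}"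

definition N1 :: "(real \<times> real \<Rightarrow> real) \<Rightarrow> real \<times> real \<Rightarrow> real" where
  "N1 u p = (px u p - snd p) / sqrt ((px u p - snd p)\<^sup>2 + (py u p + fst p)\<^sup>2)"

definition N2 :: "(real \<times> real \<Rightarrow> real) \<Rightarrow> real \<times> real \<Rightarrow> real" where
  "N2 u p = (py u p + fst p) / sqrt ((px u p - snd p)\<^sup>2 + (py u p + fst p)\<^sup>2)"

text \<open>H = div N(u) (Euclidean divergence), meaningful on \<Omega> \<setminus> S(u).\<close>
definition Hcurv :: "(real \<times> real \<Rightarrow> real) \<Rightarrow> real \<times> real \<Rightarrow> real" where
  "Hcurv u p = px (N1 u) p + py (N2 u) p"

definition detU :: "(real \<times> real \<Rightarrow> real) \<Rightarrow> real \<times> real \<Rightarrow> real" where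
  "detU u p = px (px u) p * py (py u) p - (py (px u) p - 1) * (py (px u) p + 1)"

definition C1_curve :: "(real \<Rightarrow> real \<times> real) \<Rightarrow> real \<Rightarrow> real \<Rightarrow> bool" where
  "C1_curve \<gamma> a b \<longleftrightarrow> a < b \<and> \<gamma> C1_differentiable_on {a<..<b} \<and>
     (\<forall>t\<in>{a<..<b}. vector_derivative \<gamma> (at t) \<noteq> 0) \<and>
     inj_on \<gamma> {a<..<b} \<and>
     continuous_on (\<gamma> ` {a<..<b}) (inv_into {a<..<b} \<gamma>)"

end

(*
  Write X = (u_x - y, u_y + x). Then S(u) is the zero set of X, the Jacobian matrix of X is U,
  and by Schwarz's theorem U - U^T = 2 J with J the rotation by a right angle.

  If det U(p0) is nonzero, the linearisation of X at p0 is invertible, so p0 is an isolated zero.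

  If det U(p0) = 0, the nonzero skew part forces U(p0) to have rank one. For a unit left null
  vector b of U(p0), the component h = <b, X> has vanishing derivative at p0 while G = <J b, X>
  has a nonzero gradient, so {G = 0} is a C^1 curve through p0 by the implicit function theorem.
  The curvature is H = Q(X) / |X|^3 for a quadratic form Q depending continuously on the point,
  and at p0 it factorises as Q(X) = h (k h - 2 G). On a cone |G - t h| <= |h| / 2 around a
  suitable line this gives |Q(X)| >= c |X|^2, so the bound |H| <= C / r forces |h| >= c' r there.
  As h = o(r), moving from a point of {G = 0} with h nonzero into that cone along the gradient
  of G is impossible, hence S(u) = {G = 0} near p0.

  Conversely, a C^1 curve through p0 inside S(u) makes p0 a limit point of S(u).
*)
theory Submission
  imports Defs
begin

section \<open>Partial derivatives and strict gradients\<close>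

definition has_continuous_partials ::
    "(real \<times> real) set \<Rightarrow> (real \<times> real \<Rightarrow> real) \<Rightarrow> (real \<times> real \<Rightarrow> real) \<Rightarrow> (real \<times> real \<Rightarrow> real) \<Rightarrow> bool" where
  "has_continuous_partials \<Omega> f fx fy \<longleftrightarrow>
     (\<forall>r\<in>\<Omega>. ((\<lambda>t. f (t, snd r)) has_real_derivative fx r) (at (fst r)) \<and>
            ((\<lambda>t. f (fst r, t)) has_real_derivative fy r) (at (snd r))) \<and>
     continuous_on \<Omega> fx \<and> continuous_on \<Omega> fy"

definition has_strict_gradient :: "(real \<times> real \<Rightarrow> real) \<Rightarrow> real \<times> real \<Rightarrow> real \<times> real \<Rightarrow> bool" where
  "has_strict_gradient f g p \<longleftrightarrow>
     (\<forall>e>0. \<exists>\<delta>>0. \<forall>q\<in>ball p \<delta>. \<forall>q'\<in>ball p \<delta>. \<bar>f q - f q' - g \<bullet> (q - q')\<bar> \<le> e * dist q q')"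

lemma dist_Pair_le_abs_sum: "dist (a, b) (c, d) \<le> \<bar>a - c\<bar> + \<bar>b - (d::real)\<bar>"
  using sqrt_sum_squares_le_sum_abs[of "a - c" "b - d"] by (simp add: dist_Pair_Pair dist_real_def)

lemma abs_fst_diff_le_dist: "\<bar>fst q - fst q'\<bar> \<le> dist q (q' :: real \<times> real)"
  using dist_fst_le[of q q'] by (simp add: dist_real_def)

lemma abs_snd_diff_le_dist: "\<bar>snd q - snd q'\<bar> \<le> dist q (q' :: real \<times> real)"
  using dist_snd_le[of q q'] by (simp add: dist_real_def)

lemma has_continuous_partialsD:
  assumes "has_continuous_partials \<Omega> f fx fy" "r \<in> \<Omega>"
  shows "((\<lambda>t. f (t, snd r)) has_real_derivative fx r) (at (fst r))"
    and "((\<lambda>t. f (fst r, t)) has_real_derivative fy r) (at (snd r))"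
  using assms unfolding has_continuous_partials_def by auto

lemma has_continuous_partials_subset:
  "has_continuous_partials \<Omega> f fx fy \<Longrightarrow> \<Omega>' \<subseteq> \<Omega> \<Longrightarrow> has_continuous_partials \<Omega>' f fx fy"
  unfolding has_continuous_partials_def by (auto intro: continuous_on_subset)

lemma has_continuous_partials_add:
  "has_continuous_partials \<Omega> f fx fy \<Longrightarrow> has_continuous_partials \<Omega> g gx gy \<Longrightarrow>
   has_continuous_partials \<Omega> (\<lambda>p. f p + g p) (\<lambda>p. fx p + gx p) (\<lambda>p. fy p + gy p)"
  unfolding has_continuous_partials_def by (auto intro!: derivative_eq_intros continuous_intros)

lemma has_continuous_partials_cmult:
  "has_continuous_partials \<Omega> f fx fy \<Longrightarrow>
   has_continuous_partials \<Omega> (\<lambda>p. c * f p) (\<lambda>p. c * fx p) (\<lambda>p. c * fy p)"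
  unfolding has_continuous_partials_def by (auto intro!: derivative_eq_intros continuous_intros)

lemma has_continuous_partials_swap:
  assumes "has_continuous_partials \<Omega> f fx fy"
  shows "has_continuous_partials (prod.swap -` \<Omega>) (\<lambda>p. f (prod.swap p))
           (\<lambda>p. fy (prod.swap p)) (\<lambda>p. fx (prod.swap p))"
proof -
  have "continuous_on (prod.swap -` \<Omega>) (\<lambda>p. h (prod.swap p))" if "continuous_on \<Omega> h" for h :: "_ \<Rightarrow> real"
    by (rule continuous_on_compose2[OF that]) (auto intro: continuous_intros)
  then show ?thesis
    using assms unfolding has_continuous_partials_def by auto
qed

lemma MVT_linear_deviation:
  fixes \<phi> \<phi>' :: "real \<Rightarrow> real"
  assumes deriv: "\<And>t. min a b \<le> t \<Longrightarrow> t \<le> max a b \<Longrightarrow> (\<phi> has_real_derivative \<phi>' t) (at t)"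
    and bound: "\<And>t. min a b \<le> t \<Longrightarrow> t \<le> max a b \<Longrightarrow> \<bar>\<phi>' t - L\<bar> \<le> e"
  shows "\<bar>\<phi> b - \<phi> a - L * (b - a)\<bar> \<le> e * \<bar>b - a\<bar>"
proof -
  have "\<bar>\<phi> y - \<phi> x - L * (y - x)\<bar> \<le> e * \<bar>y - x\<bar>" if "x < y" "min a b = x" "max a b = y" for x y
  proof -
    have "((\<lambda>t. \<phi> t - L * t) has_real_derivative \<phi>' t - L) (at t)" if "x \<le> t" "t \<le> y" for t
      using deriv[of t] that \<open>min a b = x\<close> \<open>max a b = y\<close> by (auto intro!: derivative_eq_intros)
    then obtain z where z: "x < z" "z < y" "\<phi> y - L * y - (\<phi> x - L * x) = (y - x) * (\<phi>' z - L)"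
      using MVT2[OF \<open>x < y\<close>, of "\<lambda>t. \<phi> t - L * t" "\<lambda>t. \<phi>' t - L"] by blast
    then have "\<phi> y - \<phi> x - L * (y - x) = (y - x) * (\<phi>' z - L)"
      by (simp add: algebra_simps)
    then have "\<bar>\<phi> y - \<phi> x - L * (y - x)\<bar> = \<bar>y - x\<bar> * \<bar>\<phi>' z - L\<bar>"
      by (simp add: abs_mult)
    also have "\<dots> \<le> \<bar>y - x\<bar> * e"
      using bound[of z] z that by (intro mult_left_mono) auto
    finally show ?thesis by (simp add: mult.commute)
  qed
  from this[of a b] this[of b a] show ?thesis
    by (cases a b rule: linorder_cases) (auto simp: abs_minus_commute algebra_simps)
qed

lemma has_continuous_partials_imp_strict_gradient:
  assumes "open \<Omega>" and partials: "has_continuous_partials \<Omega> f fx fy" and "p \<in> \<Omega>"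
  shows "has_strict_gradient f (fx p, fy p) p"
  unfolding has_strict_gradient_def
proof (intro allI impI)
  fix e :: real assume "e > 0"
  obtain d where d: "d > 0" "ball p d \<subseteq> \<Omega>"
    using assms(1,3) open_contains_ball by blast
  define \<phi> where "\<phi> r = \<bar>fx r - fx p\<bar> + \<bar>fy r - fy p\<bar>" for r
  have "continuous_on \<Omega> \<phi>"
    using partials unfolding has_continuous_partials_def \<phi>_def by (auto intro!: continuous_intros)
  then obtain d' where "d' > 0" "\<forall>r\<in>\<Omega>. dist r p < d' \<longrightarrow> dist (\<phi> r) (\<phi> p) < e / 2"
    using \<open>e > 0\<close> \<open>p \<in> \<Omega>\<close> unfolding continuous_on_iff by (meson half_gt_zero)
  then have d': "d' > 0"
    "\<And>r. r \<in> \<Omega> \<Longrightarrow> dist r p < d' \<Longrightarrow> \<bar>fx r - fx p\<bar> + \<bar>fy r - fy p\<bar> < e / 2"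
    by (auto simp: \<phi>_def dist_real_def)
  define \<delta> where "\<delta> = min d d' / 2"
  have near: "(a, b) \<in> \<Omega> \<and> \<bar>fx (a, b) - fx p\<bar> \<le> e / 2 \<and> \<bar>fy (a, b) - fy p\<bar> \<le> e / 2"
    if "\<bar>a - fst p\<bar> < \<delta>" "\<bar>b - snd p\<bar> < \<delta>" for a b
  proof -
    have close: "dist (a, b) p < min d d'"
      using dist_Pair_le_abs_sum[of a b "fst p" "snd p"] that by (simp add: \<delta>_def)
    then have "(a, b) \<in> \<Omega>"
      using d(2) by (auto simp: dist_commute)
    moreover have "\<bar>fx (a, b) - fx p\<bar> + \<bar>fy (a, b) - fy p\<bar> < e / 2"
      using d'(2) calculation close by simp
    ultimately show ?thesis
      by (smt (verit) abs_ge_zero)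
  qed
  show "\<exists>\<delta>>0. \<forall>q\<in>ball p \<delta>. \<forall>q'\<in>ball p \<delta>. \<bar>f q - f q' - (fx p, fy p) \<bullet> (q - q')\<bar> \<le> e * dist q q'"
  proof (intro exI[of _ \<delta>] conjI ballI)
    show "\<delta> > 0" using d d' by (simp add: \<delta>_def)
    fix q q' assume "q \<in> ball p \<delta>" "q' \<in> ball p \<delta>"
    then have box: "\<bar>fst q - fst p\<bar> < \<delta>" "\<bar>snd q - snd p\<bar> < \<delta>" "\<bar>fst q' - fst p\<bar> < \<delta>" "\<bar>snd q' - snd p\<bar> < \<delta>"
      using abs_fst_diff_le_dist[of _ p] abs_snd_diff_le_dist[of _ p]
      by (metis dist_commute mem_ball order_le_less_trans)+
    have between: "\<bar>t - fst p\<bar> < \<delta>" if "min (fst q') (fst q) \<le> t" "t \<le> max (fst q') (fst q)" for t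
      using that box by (auto simp: abs_less_iff)
    have between': "\<bar>t - snd p\<bar> < \<delta>" if "min (snd q') (snd q) \<le> t" "t \<le> max (snd q') (snd q)" for t
      using that box by (auto simp: abs_less_iff)
    have horizontal: "\<bar>f (fst q, snd q) - f (fst q', snd q) - fx p * (fst q - fst q')\<bar> \<le> e / 2 * \<bar>fst q - fst q'\<bar>"
      using near[OF between box(2)] has_continuous_partialsD(1)[OF partials, of "(_, snd q)"]
      by (intro MVT_linear_deviation[where \<phi> = "\<lambda>t. f (t, snd q)"]) auto
    have vertical: "\<bar>f (fst q', snd q) - f (fst q', snd q') - fy p * (snd q - snd q')\<bar> \<le> e / 2 * \<bar>snd q - snd q'\<bar>"
      using near[OF box(3) between'] has_continuous_partialsD(2)[OF partials, of "(fst q', _)"]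
      by (intro MVT_linear_deviation[where \<phi> = "\<lambda>t. f (fst q', t)"]) auto
    have "f q - f q' - (fx p, fy p) \<bullet> (q - q') =
        (f (fst q, snd q) - f (fst q', snd q) - fx p * (fst q - fst q')) +
        (f (fst q', snd q) - f (fst q', snd q') - fy p * (snd q - snd q'))"
      by (simp add: inner_prod_def algebra_simps)
    then have "\<bar>f q - f q' - (fx p, fy p) \<bullet> (q - q')\<bar> \<le> e / 2 * (\<bar>fst q - fst q'\<bar> + \<bar>snd q - snd q'\<bar>)"
      using horizontal vertical by (smt (verit) distrib_left)
    also have "\<dots> \<le> e / 2 * (2 * dist q q')"
      using abs_fst_diff_le_dist[of q q'] abs_snd_diff_le_dist[of q q'] \<open>e > 0\<close> by (intro mult_left_mono) auto
    finally show "\<bar>f q - f q' - (fx p, fy p) \<bullet> (q - q')\<bar> \<le> e * dist q q'" by simp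
  qed
qed

lemma mixed_partials_eq:
  assumes "open \<Omega>" "p \<in> \<Omega>"
    and dx: "\<And>r. r \<in> \<Omega> \<Longrightarrow> ((\<lambda>t. f (t, snd r)) has_real_derivative fx r) (at (fst r))"
    and dy: "\<And>r. r \<in> \<Omega> \<Longrightarrow> ((\<lambda>t. f (fst r, t)) has_real_derivative fy r) (at (snd r))"
    and grad_fx: "has_strict_gradient fx (a, b) p" and grad_fy: "has_strict_gradient fy (c, d) p"
  shows "b = c"
proof (rule ccontr)
  assume "b \<noteq> c"
  define e where "e = \<bar>b - c\<bar> / 4"
  have "e > 0" using \<open>b \<noteq> c\<close> by (simp add: e_def)
  obtain \<delta>0 where "\<delta>0 > 0" "ball p \<delta>0 \<subseteq> \<Omega>"
    using assms(1,2) open_contains_ball by blast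
  obtain \<delta>1 where "\<delta>1 > 0" and lin_fx: "\<forall>q\<in>ball p \<delta>1. \<forall>q'\<in>ball p \<delta>1. \<bar>fx q - fx q' - (a, b) \<bullet> (q - q')\<bar> \<le> e * dist q q'"
    using grad_fx \<open>e > 0\<close> unfolding has_strict_gradient_def by blast
  obtain \<delta>2 where "\<delta>2 > 0" and lin_fy: "\<forall>q\<in>ball p \<delta>2. \<forall>q'\<in>ball p \<delta>2. \<bar>fy q - fy q' - (c, d) \<bullet> (q - q')\<bar> \<le> e * dist q q'"
    using grad_fy \<open>e > 0\<close> unfolding has_strict_gradient_def by blast
  define h where "h = min \<delta>0 (min \<delta>1 \<delta>2) / 4"
  have "h > 0" using \<open>\<delta>0 > 0\<close> \<open>\<delta>1 > 0\<close> \<open>\<delta>2 > 0\<close> by (simp add: h_def)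
  obtain x y where p: "p = (x, y)" by (cases p)
  have square: "(s, t) \<in> \<Omega> \<and> (s, t) \<in> ball p \<delta>1 \<and> (s, t) \<in> ball p \<delta>2"
    if "x \<le> s" "s \<le> x + h" "y \<le> t" "t \<le> y + h" for s t
  proof -
    have "dist p (s, t) \<le> 2 * h"
      using dist_Pair_le_abs_sum[of x y s t] that by (simp add: p)
    then have "dist p (s, t) < min \<delta>0 (min \<delta>1 \<delta>2)"
      using \<open>h > 0\<close> by (simp add: h_def)
    then show ?thesis using \<open>ball p \<delta>0 \<subseteq> \<Omega>\<close> by auto
  qed
  \<comment> \<open>The mean value theorem in either variable compares this second difference with \<open>b * h\<^sup>2\<close> and with \<open>c * h\<^sup>2\<close>.\<close>
  define D where "D = f (x + h, y + h) - f (x + h, y) - f (x, y + h) + f (x, y)"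
  have "((\<lambda>s. f (s, y + h) - f (s, y)) has_real_derivative fx (s, y + h) - fx (s, y)) (at s)"
    if "x \<le> s" "s \<le> x + h" for s
    using dx[of "(s, y + h)"] dx[of "(s, y)"] square that \<open>h > 0\<close> by (auto intro!: derivative_eq_intros)
  then obtain z where z: "x < z" "z < x + h" "D = h * (fx (z, y + h) - fx (z, y))"
    using MVT2[of x "x + h" "\<lambda>s. f (s, y + h) - f (s, y)" "\<lambda>s. fx (s, y + h) - fx (s, y)"] \<open>h > 0\<close>
    by (auto simp: D_def algebra_simps)
  have "\<bar>fx (z, y + h) - fx (z, y) - (a, b) \<bullet> ((z, y + h) - (z, y))\<bar> \<le> e * dist (z, y + h) (z, y)"
    using square[of z "y + h"] square[of z y] z \<open>h > 0\<close> by (intro lin_fx[rule_format]) auto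
  then have fx_diff: "\<bar>fx (z, y + h) - fx (z, y) - b * h\<bar> \<le> e * h"
    using \<open>h > 0\<close> by (simp add: dist_Pair_Pair dist_real_def)
  have "D - b * h * h = h * (fx (z, y + h) - fx (z, y) - b * h)"
    by (simp add: z(3) algebra_simps)
  then have "\<bar>D - b * h * h\<bar> = h * \<bar>fx (z, y + h) - fx (z, y) - b * h\<bar>"
    using \<open>h > 0\<close> by (simp add: abs_mult)
  also have "\<dots> \<le> h * (e * h)"
    using fx_diff \<open>h > 0\<close> by (intro mult_left_mono) auto
  finally have Dx: "\<bar>D - b * h * h\<bar> \<le> e * h * h"
    by (simp add: algebra_simps)
  have "((\<lambda>t. f (x + h, t) - f (x, t)) has_real_derivative fy (x + h, t) - fy (x, t)) (at t)"
    if "y \<le> t" "t \<le> y + h" for t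
    using dy[of "(x + h, t)"] dy[of "(x, t)"] square that \<open>h > 0\<close> by (auto intro!: derivative_eq_intros)
  then obtain w where w: "y < w" "w < y + h" "D = h * (fy (x + h, w) - fy (x, w))"
    using MVT2[of y "y + h" "\<lambda>t. f (x + h, t) - f (x, t)" "\<lambda>t. fy (x + h, t) - fy (x, t)"] \<open>h > 0\<close>
    by (auto simp: D_def algebra_simps)
  have "\<bar>fy (x + h, w) - fy (x, w) - (c, d) \<bullet> ((x + h, w) - (x, w))\<bar> \<le> e * dist (x + h, w) (x, w)"
    using square[of "x + h" w] square[of x w] w \<open>h > 0\<close> by (intro lin_fy[rule_format]) auto
  then have fy_diff: "\<bar>fy (x + h, w) - fy (x, w) - c * h\<bar> \<le> e * h"
    using \<open>h > 0\<close> by (simp add: dist_Pair_Pair dist_real_def)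
  have "D - c * h * h = h * (fy (x + h, w) - fy (x, w) - c * h)"
    by (simp add: w(3) algebra_simps)
  then have "\<bar>D - c * h * h\<bar> = h * \<bar>fy (x + h, w) - fy (x, w) - c * h\<bar>"
    using \<open>h > 0\<close> by (simp add: abs_mult)
  also have "\<dots> \<le> h * (e * h)"
    using fy_diff \<open>h > 0\<close> by (intro mult_left_mono) auto
  finally have Dy: "\<bar>D - c * h * h\<bar> \<le> e * h * h"
    by (simp add: algebra_simps)
  have "(b - c) * (h * h) = (D - c * h * h) - (D - b * h * h)"
    by (simp add: algebra_simps)
  then have "\<bar>b - c\<bar> * (h * h) = \<bar>(D - c * h * h) - (D - b * h * h)\<bar>"
    by (metis abs_mult abs_mult_self_eq)
  also have "\<dots> \<le> 2 * e * (h * h)"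
    using Dx Dy by linarith
  finally have "\<bar>b - c\<bar> * (h * h) \<le> 2 * e * (h * h)" .
  then show False
    using \<open>h > 0\<close> \<open>b \<noteq> c\<close> by (simp add: e_def)
qed

lemma DERIV_normalized_component:
  fixes a c :: "real \<Rightarrow> real"
  assumes da: "(a has_real_derivative A) (at x)" and dc: "(c has_real_derivative C) (at x)"
    and nonzero: "(a x)\<^sup>2 + (c x)\<^sup>2 > 0"
  shows "((\<lambda>t. a t / sqrt ((a t)\<^sup>2 + (c t)\<^sup>2)) has_real_derivative
          c x * (c x * A - a x * C) / (sqrt ((a x)\<^sup>2 + (c x)\<^sup>2)) ^ 3) (at x)"
proof -
  let ?n = "sqrt ((a x)\<^sup>2 + (c x)\<^sup>2)"
  have n: "?n > 0" "?n\<^sup>2 = (a x)\<^sup>2 + (c x)\<^sup>2"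
    using nonzero by auto
  have "((\<lambda>t. sqrt ((a t)\<^sup>2 + (c t)\<^sup>2)) has_real_derivative (a x * A + c x * C) / ?n) (at x)"
    using da dc nonzero by (auto intro!: derivative_eq_intros) (auto simp: field_split_simps)
  then have deriv: "((\<lambda>t. a t / sqrt ((a t)\<^sup>2 + (c t)\<^sup>2)) has_real_derivative
      (A * ?n - a x * ((a x * A + c x * C) / ?n)) / (?n * ?n)) (at x)"
    using n(1) by (intro DERIV_divide[OF da]) auto
  have alg: "(A * n - a x * ((a x * A + c x * C) / n)) / (n * n) = c x * (c x * A - a x * C) / n ^ 3"
    if "n > 0" "n\<^sup>2 = (a x)\<^sup>2 + (c x)\<^sup>2" for n
  proof -
    have "(A * n - a x * ((a x * A + c x * C) / n)) / (n * n) = (A * n\<^sup>2 - a x * (a x * A + c x * C)) / n ^ 3"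
      using that(1) by (simp add: field_simps power2_eq_square power3_eq_cube)
    also have "\<dots> = c x * (c x * A - a x * C) / n ^ 3"
      unfolding that(2) by (simp add: algebra_simps power2_eq_square)
    finally show ?thesis .
  qed
  from deriv show ?thesis
    unfolding alg[OF n] .
qed

lemma abs_det2_mult_le:
  fixes m11 m12 m21 m22 v1 v2 :: real
  shows "\<bar>m11 * m22 - m12 * m21\<bar> * (\<bar>v1\<bar> + \<bar>v2\<bar>)
    \<le> (\<bar>m11\<bar> + \<bar>m12\<bar> + \<bar>m21\<bar> + \<bar>m22\<bar>) * (\<bar>m11 * v1 + m12 * v2\<bar> + \<bar>m21 * v1 + m22 * v2\<bar>)"
proof -
  define r1 where "r1 = m11 * v1 + m12 * v2"
  define r2 where "r2 = m21 * v1 + m22 * v2"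
  have "(m11 * m22 - m12 * m21) * v1 = m22 * r1 - m12 * r2"
    and "(m11 * m22 - m12 * m21) * v2 = m11 * r2 - m21 * r1"
    by (simp_all add: r1_def r2_def algebra_simps)
  then have "\<bar>m11 * m22 - m12 * m21\<bar> * \<bar>v1\<bar> \<le> \<bar>m22\<bar> * \<bar>r1\<bar> + \<bar>m12\<bar> * \<bar>r2\<bar>"
    and "\<bar>m11 * m22 - m12 * m21\<bar> * \<bar>v2\<bar> \<le> \<bar>m11\<bar> * \<bar>r2\<bar> + \<bar>m21\<bar> * \<bar>r1\<bar>"
    by (metis abs_mult abs_triangle_ineq4)+
  moreover have "\<bar>m22\<bar> * \<bar>r1\<bar> + \<bar>m12\<bar> * \<bar>r2\<bar> + (\<bar>m11\<bar> * \<bar>r2\<bar> + \<bar>m21\<bar> * \<bar>r1\<bar>)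
      \<le> (\<bar>m11\<bar> + \<bar>m12\<bar> + \<bar>m21\<bar> + \<bar>m22\<bar>) * (\<bar>r1\<bar> + \<bar>r2\<bar>)"
    by (simp add: algebra_simps)
  ultimately show ?thesis
    unfolding r1_def r2_def by (simp add: distrib_left)
qed

lemma strict_gradients_isolated_common_zero:
  assumes grad1: "has_strict_gradient f1 (m11, m12) p0" and grad2: "has_strict_gradient f2 (m21, m22) p0"
    and "f1 p0 = 0" "f2 p0 = 0" and det: "m11 * m22 - m12 * m21 \<noteq> 0"
  shows "\<exists>\<delta>>0. \<forall>q\<in>ball p0 \<delta>. f1 q = 0 \<and> f2 q = 0 \<longrightarrow> q = p0"
proof -
  define S where "S = \<bar>m11\<bar> + \<bar>m12\<bar> + \<bar>m21\<bar> + \<bar>m22\<bar>"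
  have "S > 0"
    using det unfolding S_def by (cases "m11 = 0"; cases "m21 = 0") auto
  define e where "e = \<bar>m11 * m22 - m12 * m21\<bar> / (4 * S)"
  have "e > 0" using det \<open>S > 0\<close> by (simp add: e_def)
  obtain \<delta>1 where "\<delta>1 > 0" and lin1: "\<forall>q\<in>ball p0 \<delta>1. \<forall>q'\<in>ball p0 \<delta>1. \<bar>f1 q - f1 q' - (m11, m12) \<bullet> (q - q')\<bar> \<le> e * dist q q'"
    using grad1 \<open>e > 0\<close> unfolding has_strict_gradient_def by blast
  obtain \<delta>2 where "\<delta>2 > 0" and lin2: "\<forall>q\<in>ball p0 \<delta>2. \<forall>q'\<in>ball p0 \<delta>2. \<bar>f2 q - f2 q' - (m21, m22) \<bullet> (q - q')\<bar> \<le> e * dist q q'"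
    using grad2 \<open>e > 0\<close> unfolding has_strict_gradient_def by blast
  show ?thesis
  proof (intro exI[of _ "min \<delta>1 \<delta>2"] conjI ballI impI)
    show "min \<delta>1 \<delta>2 > 0" using \<open>\<delta>1 > 0\<close> \<open>\<delta>2 > 0\<close> by simp
    fix q assume "q \<in> ball p0 (min \<delta>1 \<delta>2)" and zero: "f1 q = 0 \<and> f2 q = 0"
    define v1 where "v1 = fst q - fst p0"
    define v2 where "v2 = snd q - snd p0"
    have "\<bar>m11 * v1 + m12 * v2\<bar> \<le> e * dist q p0" "\<bar>m21 * v1 + m22 * v2\<bar> \<le> e * dist q p0"
      using lin1[rule_format, of q p0] lin2[rule_format, of q p0] \<open>q \<in> ball p0 (min \<delta>1 \<delta>2)\<close>
        \<open>\<delta>1 > 0\<close> \<open>\<delta>2 > 0\<close> zero \<open>f1 p0 = 0\<close> \<open>f2 p0 = 0\<close>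
      by (auto simp: v1_def v2_def inner_prod_def)
    then have "S * (\<bar>m11 * v1 + m12 * v2\<bar> + \<bar>m21 * v1 + m22 * v2\<bar>) \<le> S * (2 * e * dist q p0)"
      using \<open>S > 0\<close> by (intro mult_left_mono) auto
    then have "\<bar>m11 * m22 - m12 * m21\<bar> * (\<bar>v1\<bar> + \<bar>v2\<bar>) \<le> S * (2 * e * dist q p0)"
      using abs_det2_mult_le[of m11 m22 m12 m21 v1 v2] unfolding S_def by linarith
    also have "\<dots> = \<bar>m11 * m22 - m12 * m21\<bar> * dist q p0 / 2"
      using \<open>S > 0\<close> by (simp add: e_def)
    also have "\<dots> \<le> \<bar>m11 * m22 - m12 * m21\<bar> * (\<bar>v1\<bar> + \<bar>v2\<bar>) / 2"
      using dist_Pair_le_abs_sum[of "fst q" "snd q" "fst p0" "snd p0"]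
      by (intro divide_right_mono mult_left_mono) (auto simp: v1_def v2_def)
    finally have "\<bar>v1\<bar> + \<bar>v2\<bar> \<le> 0"
      using det by simp
    then have "v1 = 0" "v2 = 0"
      by linarith+
    then show "q = p0"
      by (simp add: v1_def v2_def prod_eq_iff)
  qed
qed

section \<open>Implicit functions and \<open>C\<^sup>1\<close> curves\<close>

lemma implicit_graph_on_box:
  fixes f :: "real \<times> real \<Rightarrow> real"
  assumes "r > 0" "c > 0" "K > 0" "f (x0, y0) = 0"
    and mono: "\<And>s t1 t2. \<bar>s - x0\<bar> \<le> r \<Longrightarrow> \<bar>t1 - y0\<bar> \<le> r \<Longrightarrow> \<bar>t2 - y0\<bar> \<le> r \<Longrightarrow> t1 \<le> t2 \<Longrightarrow>
                 c * (t2 - t1) \<le> f (s, t2) - f (s, t1)"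
    and lip: "\<And>s1 s2 t. \<bar>s1 - x0\<bar> \<le> r \<Longrightarrow> \<bar>s2 - x0\<bar> \<le> r \<Longrightarrow> \<bar>t - y0\<bar> \<le> r \<Longrightarrow>
                 \<bar>f (s2, t) - f (s1, t)\<bar> \<le> K * \<bar>s2 - s1\<bar>"
    and cont: "\<And>s. \<bar>s - x0\<bar> \<le> r \<Longrightarrow> continuous_on {y0 - r..y0 + r} (\<lambda>t. f (s, t))"
  obtains \<tau> g where "0 < \<tau>" "\<tau> \<le> r"
    "\<And>s. \<bar>s - x0\<bar> < \<tau> \<Longrightarrow> \<bar>g s - y0\<bar> < r \<and> f (s, g s) = 0"
    "\<And>s t. \<bar>s - x0\<bar> < \<tau> \<Longrightarrow> \<bar>t - y0\<bar> < r \<Longrightarrow> f (s, t) = 0 \<Longrightarrow> t = g s"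
    "\<And>s1 s2. \<bar>s1 - x0\<bar> < \<tau> \<Longrightarrow> \<bar>s2 - x0\<bar> < \<tau> \<Longrightarrow> c * \<bar>g s2 - g s1\<bar> \<le> K * \<bar>s2 - s1\<bar>"
proof -
  have sep: "c * \<bar>t2 - t1\<bar> \<le> \<bar>f (s, t2) - f (s, t1)\<bar>"
    if "\<bar>s - x0\<bar> \<le> r" "\<bar>t1 - y0\<bar> \<le> r" "\<bar>t2 - y0\<bar> \<le> r" for s t1 t2
    using mono[OF that] mono[OF that(1,3,2)] by (cases "t1 \<le> t2") (auto simp: abs_if)
  define \<tau> where "\<tau> = min r (c * r / K)"
  have \<tau>: "\<tau> > 0" "\<tau> \<le> r" "K * \<tau> \<le> c * r"
    using assms(1-3) by (auto simp: \<tau>_def min_def field_simps)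
  have sign: "f (s, y0 - r) < 0 \<and> 0 < f (s, y0 + r)" if "\<bar>s - x0\<bar> < \<tau>" for s
  proof -
    have "K * \<bar>s - x0\<bar> < c * r"
      using that \<tau> \<open>K > 0\<close> by (smt (verit) mult_strict_left_mono)
    moreover have "c * r \<le> f (x0, y0 + r) - f (x0, y0)" "c * r \<le> f (x0, y0) - f (x0, y0 - r)"
      using mono[of x0 y0 "y0 + r"] mono[of x0 "y0 - r" y0] \<open>r > 0\<close> by auto
    moreover have "\<bar>f (s, y0 + r) - f (x0, y0 + r)\<bar> \<le> K * \<bar>s - x0\<bar>"
      "\<bar>f (s, y0 - r) - f (x0, y0 - r)\<bar> \<le> K * \<bar>s - x0\<bar>"
      using lip[of x0 s] that \<tau> \<open>r > 0\<close> by auto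
    ultimately show ?thesis
      using \<open>f (x0, y0) = 0\<close> by linarith
  qed
  have ex1: "\<exists>!t. \<bar>t - y0\<bar> < r \<and> f (s, t) = 0" if s: "\<bar>s - x0\<bar> < \<tau>" for s
  proof -
    obtain t where t: "y0 - r \<le> t" "t \<le> y0 + r" "f (s, t) = 0"
      using IVT'[of "\<lambda>t. f (s, t)" "y0 - r" 0 "y0 + r"] sign[OF s] cont[of s] s \<tau> \<open>r > 0\<close>
      by auto
    then have "\<bar>t - y0\<bar> < r"
      using sign[OF s] by (cases "t = y0 - r \<or> t = y0 + r") auto
    moreover have "t' = t" if "\<bar>t' - y0\<bar> < r" "f (s, t') = 0" for t'
    proof -
      have "\<bar>s - x0\<bar> \<le> r" "\<bar>t - y0\<bar> \<le> r" "\<bar>t' - y0\<bar> \<le> r"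
        using s \<tau> t that by auto
      then have "c * \<bar>t' - t\<bar> \<le> 0"
        using sep[of s t t'] that t by simp
      then show ?thesis
        using \<open>c > 0\<close> by (simp add: mult_le_0_iff)
    qed
    ultimately show ?thesis
      using t by blast
  qed
  define g where "g s = (THE t. \<bar>t - y0\<bar> < r \<and> f (s, t) = 0)" for s
  have g: "\<bar>g s - y0\<bar> < r \<and> f (s, g s) = 0" if "\<bar>s - x0\<bar> < \<tau>" for s
    unfolding g_def by (rule theI'[OF ex1[OF that]])
  have unique: "t = g s" if "\<bar>s - x0\<bar> < \<tau>" "\<bar>t - y0\<bar> < r" "f (s, t) = 0" for s t
    unfolding g_def using the1_equality[OF ex1[OF that(1)]] that(2,3) by simp
  have lipschitz: "c * \<bar>g s2 - g s1\<bar> \<le> K * \<bar>s2 - s1\<bar>" if "\<bar>s1 - x0\<bar> < \<tau>" "\<bar>s2 - x0\<bar> < \<tau>" for s1 s2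
  proof -
    have in_box: "\<bar>s1 - x0\<bar> \<le> r" "\<bar>s2 - x0\<bar> \<le> r" "\<bar>g s1 - y0\<bar> \<le> r" "\<bar>g s2 - y0\<bar> \<le> r"
      using g[OF that(1)] g[OF that(2)] that \<tau> by auto
    have "c * \<bar>g s2 - g s1\<bar> \<le> \<bar>f (s2, g s2) - f (s2, g s1)\<bar>"
      using sep[of s2 "g s1" "g s2"] in_box by simp
    also have "\<dots> = \<bar>f (s2, g s1) - f (s1, g s1)\<bar>"
      using g that by simp
    also have "\<dots> \<le> K * \<bar>s2 - s1\<bar>"
      using lip[of s1 s2 "g s1"] in_box by simp
    finally show ?thesis .
  qed
  show ?thesis
    by (rule that[OF \<tau>(1,2) g unique lipschitz])
qed

lemma implicit_function_DERIV:
  fixes f :: "real \<times> real \<Rightarrow> real" and g :: "real \<Rightarrow> real"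
  assumes grad: "has_strict_gradient f (a, b) (s0, g s0)" and "b \<noteq> 0"
    and "open I" "s0 \<in> I"
    and zero: "\<And>s. s \<in> I \<Longrightarrow> f (s, g s) = 0"
    and lip: "\<And>s. s \<in> I \<Longrightarrow> \<bar>g s - g s0\<bar> \<le> K * \<bar>s - s0\<bar>"
  shows "(g has_real_derivative - a / b) (at s0)"
  unfolding has_field_derivative_iff LIM_eq
proof (intro allI impI)
  fix \<epsilon> :: real assume "\<epsilon> > 0"
  define M where "M = 1 + \<bar>K\<bar>"
  have "M > 0" by (simp add: M_def add_pos_nonneg)
  define e where "e = \<epsilon> * \<bar>b\<bar> / (2 * M)"
  have "e > 0" using \<open>\<epsilon> > 0\<close> \<open>b \<noteq> 0\<close> \<open>M > 0\<close> by (simp add: e_def)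
  obtain \<delta> where "\<delta> > 0" and lin: "\<forall>q\<in>ball (s0, g s0) \<delta>. \<forall>q'\<in>ball (s0, g s0) \<delta>.
      \<bar>f q - f q' - (a, b) \<bullet> (q - q')\<bar> \<le> e * dist q q'"
    using grad \<open>e > 0\<close> unfolding has_strict_gradient_def by blast
  obtain \<sigma> where "\<sigma> > 0" "ball s0 \<sigma> \<subseteq> I"
    using \<open>open I\<close> \<open>s0 \<in> I\<close> open_contains_ball by blast
  show "\<exists>d>0. \<forall>s. s \<noteq> s0 \<and> norm (s - s0) < d \<longrightarrow> norm ((g s - g s0) / (s - s0) - - a / b) < \<epsilon>"
  proof (intro exI[of _ "min \<sigma> (\<delta> / M)"] conjI allI impI)
    show "min \<sigma> (\<delta> / M) > 0" using \<open>\<sigma> > 0\<close> \<open>\<delta> > 0\<close> \<open>M > 0\<close> by simp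
    fix s assume s: "s \<noteq> s0 \<and> norm (s - s0) < min \<sigma> (\<delta> / M)"
    then have "s \<in> I" using \<open>ball s0 \<sigma> \<subseteq> I\<close> by (auto simp: dist_real_def)
    have "\<bar>g s - g s0\<bar> \<le> \<bar>K\<bar> * \<bar>s - s0\<bar>"
      using lip[OF \<open>s \<in> I\<close>] by (smt (verit) abs_ge_zero abs_ge_self mult_right_mono)
    then have step: "dist (s, g s) (s0, g s0) \<le> M * \<bar>s - s0\<bar>"
      using dist_Pair_le_abs_sum[of s "g s" s0 "g s0"] by (simp add: M_def algebra_simps)
    also have "\<dots> < \<delta>"
      using s \<open>M > 0\<close> by (simp add: field_simps)
    finally have "(s, g s) \<in> ball (s0, g s0) \<delta>"
      by (simp add: dist_commute)
    then have "\<bar>a * (s - s0) + b * (g s - g s0)\<bar> \<le> e * dist (s, g s) (s0, g s0)"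
      using lin[rule_format, of "(s, g s)" "(s0, g s0)"] zero[OF \<open>s \<in> I\<close>] zero[OF \<open>s0 \<in> I\<close>] \<open>\<delta> > 0\<close>
      by simp
    also have "\<dots> \<le> e * (M * \<bar>s - s0\<bar>)"
      using step \<open>e > 0\<close> by (intro mult_left_mono) auto
    finally have num: "\<bar>a * (s - s0) + b * (g s - g s0)\<bar> \<le> e * (M * \<bar>s - s0\<bar>)" .
    have "(g s - g s0) / (s - s0) - - a / b = (a * (s - s0) + b * (g s - g s0)) / (b * (s - s0))"
      using s \<open>b \<noteq> 0\<close> by (simp add: field_simps)
    then have "norm ((g s - g s0) / (s - s0) - - a / b) = \<bar>a * (s - s0) + b * (g s - g s0)\<bar> / (\<bar>b\<bar> * \<bar>s - s0\<bar>)"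
      by (simp add: abs_mult)
    also have "\<dots> \<le> e * (M * \<bar>s - s0\<bar>) / (\<bar>b\<bar> * \<bar>s - s0\<bar>)"
      using num s \<open>b \<noteq> 0\<close> by (intro divide_right_mono) auto
    also have "\<dots> = \<epsilon> / 2"
      using s \<open>b \<noteq> 0\<close> \<open>M > 0\<close> by (simp add: e_def field_simps)
    finally show "norm ((g s - g s0) / (s - s0) - - a / b) < \<epsilon>"
      using \<open>\<epsilon> > 0\<close> by simp
  qed
qed

lemma continuous_partials_box_bounds:
  assumes "open \<Omega>" "p0 \<in> \<Omega>" and partials: "has_continuous_partials \<Omega> f fx fy" and "fy p0 > 0"
  obtains r where "r > 0"
    "\<And>s t. \<bar>s - fst p0\<bar> \<le> r \<Longrightarrow> \<bar>t - snd p0\<bar> \<le> r \<Longrightarrow>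
       (s, t) \<in> \<Omega> \<and> fy p0 / 2 \<le> fy (s, t) \<and> \<bar>fx (s, t)\<bar> \<le> \<bar>fx p0\<bar> + 1"
proof -
  obtain d where "d > 0" "ball p0 d \<subseteq> \<Omega>"
    using assms(1,2) open_contains_ball by blast
  define \<psi> where "\<psi> q = \<bar>fx q - fx p0\<bar> + \<bar>fy q - fy p0\<bar>" for q
  have "continuous_on \<Omega> \<psi>"
    using partials unfolding has_continuous_partials_def \<psi>_def by (auto intro!: continuous_intros)
  moreover have "min 1 (fy p0 / 2) > 0"
    using \<open>fy p0 > 0\<close> by simp
  ultimately obtain d' where "d' > 0" "\<forall>q\<in>\<Omega>. dist q p0 < d' \<longrightarrow> dist (\<psi> q) (\<psi> p0) < min 1 (fy p0 / 2)"
    using \<open>p0 \<in> \<Omega>\<close> unfolding continuous_on_iff by blast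
  then have \<psi>_small: "\<And>q. q \<in> \<Omega> \<Longrightarrow> dist q p0 < d' \<Longrightarrow> \<psi> q < min 1 (fy p0 / 2)"
    by (simp add: \<psi>_def dist_real_def)
  show ?thesis
  proof (rule that[of "min d d' / 3"])
    show "min d d' / 3 > 0"
      using \<open>d > 0\<close> \<open>d' > 0\<close> by simp
    fix s t assume "\<bar>s - fst p0\<bar> \<le> min d d' / 3" "\<bar>t - snd p0\<bar> \<le> min d d' / 3"
    then have "dist (s, t) p0 < min d d'"
      using dist_Pair_le_abs_sum[of s t "fst p0" "snd p0"] \<open>d > 0\<close> \<open>d' > 0\<close> by simp
    then have "(s, t) \<in> \<Omega>" and small: "\<psi> (s, t) < min 1 (fy p0 / 2)"
      using \<open>ball p0 d \<subseteq> \<Omega>\<close> \<psi>_small[of "(s, t)"] by (auto simp: dist_commute)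
    moreover have "fy p0 / 2 \<le> fy (s, t)" "\<bar>fx (s, t)\<bar> \<le> \<bar>fx p0\<bar> + 1"
      using small unfolding \<psi>_def by linarith+
    ultimately show "(s, t) \<in> \<Omega> \<and> fy p0 / 2 \<le> fy (s, t) \<and> \<bar>fx (s, t)\<bar> \<le> \<bar>fx p0\<bar> + 1"
      by simp
  qed
qed

lemma box_partials_monotone_Lipschitz:
  assumes partials: "has_continuous_partials \<Omega> f fx fy"
    and box: "\<And>s t. \<bar>s - x0\<bar> \<le> r \<Longrightarrow> \<bar>t - y0\<bar> \<le> r \<Longrightarrow> (s, t) \<in> \<Omega> \<and> c \<le> fy (s, t) \<and> \<bar>fx (s, t)\<bar> \<le> K"
  shows "\<bar>s - x0\<bar> \<le> r \<Longrightarrow> \<bar>t1 - y0\<bar> \<le> r \<Longrightarrow> \<bar>t2 - y0\<bar> \<le> r \<Longrightarrow> t1 \<le> t2 \<Longrightarrow>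
           c * (t2 - t1) \<le> f (s, t2) - f (s, t1)"
    and "\<bar>s1 - x0\<bar> \<le> r \<Longrightarrow> \<bar>s2 - x0\<bar> \<le> r \<Longrightarrow> \<bar>t - y0\<bar> \<le> r \<Longrightarrow>
           \<bar>f (s2, t) - f (s1, t)\<bar> \<le> K * \<bar>s2 - s1\<bar>"
    and "\<bar>s - x0\<bar> \<le> r \<Longrightarrow> continuous_on {y0 - r..y0 + r} (\<lambda>t. f (s, t))"
proof -
  note dx = has_continuous_partialsD(1)[OF partials] and dy = has_continuous_partialsD(2)[OF partials]
  show "c * (t2 - t1) \<le> f (s, t2) - f (s, t1)"
    if "\<bar>s - x0\<bar> \<le> r" "\<bar>t1 - y0\<bar> \<le> r" "\<bar>t2 - y0\<bar> \<le> r" "t1 \<le> t2"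
  proof -
    have "\<exists>y. ((\<lambda>t. f (s, t) - c * t) has_real_derivative y) (at t) \<and> 0 \<le> y" if "t1 \<le> t" "t \<le> t2" for t
    proof (intro exI conjI)
      have "(s, t) \<in> \<Omega>" "c \<le> fy (s, t)"
        using box \<open>\<bar>s - x0\<bar> \<le> r\<close> \<open>\<bar>t1 - y0\<bar> \<le> r\<close> \<open>\<bar>t2 - y0\<bar> \<le> r\<close> that by (auto simp: abs_le_iff)
      then show "((\<lambda>t. f (s, t) - c * t) has_real_derivative fy (s, t) - c) (at t)" "0 \<le> fy (s, t) - c"
        using dy[of "(s, t)"] by (auto intro!: derivative_eq_intros)
    qed
    then have "f (s, t1) - c * t1 \<le> f (s, t2) - c * t2"
      using \<open>t1 \<le> t2\<close> by (rule DERIV_nonneg_imp_nondecreasing[rotated])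
    then show ?thesis
      by (simp add: algebra_simps)
  qed
  show "\<bar>f (s2, t) - f (s1, t)\<bar> \<le> K * \<bar>s2 - s1\<bar>"
    if "\<bar>s1 - x0\<bar> \<le> r" "\<bar>s2 - x0\<bar> \<le> r" "\<bar>t - y0\<bar> \<le> r"
  proof -
    have "\<bar>f (s2, t) - f (s1, t) - 0 * (s2 - s1)\<bar> \<le> K * \<bar>s2 - s1\<bar>"
    proof (rule MVT_linear_deviation[where \<phi> = "\<lambda>s. f (s, t)" and \<phi>' = "\<lambda>s. fx (s, t)"])
      fix s assume "min s1 s2 \<le> s" "s \<le> max s1 s2"
      then have "\<bar>s - x0\<bar> \<le> r"
        using that by auto
      then have "(s, t) \<in> \<Omega>" "\<bar>fx (s, t)\<bar> \<le> K"
        using box[of s t] that by simp_all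
      then show "((\<lambda>s. f (s, t)) has_real_derivative fx (s, t)) (at s)" "\<bar>fx (s, t) - 0\<bar> \<le> K"
        using dx[of "(s, t)"] by auto
    qed
    then show ?thesis by simp
  qed
  show "continuous_on {y0 - r..y0 + r} (\<lambda>t. f (s, t))" if "\<bar>s - x0\<bar> \<le> r"
  proof -
    have "isCont (\<lambda>t. f (s, t)) t'" if "t' \<in> {y0 - r..y0 + r}" for t'
      using box[of s t'] DERIV_isCont[OF dy[of "(s, t')"]] \<open>\<bar>s - x0\<bar> \<le> r\<close> that by (simp add: abs_le_iff)
    then show ?thesis
      by (simp add: continuous_at_imp_continuous_on)
  qed
qed

lemma Lipschitz_implicit_function_C1:
  assumes "open \<Omega>" and partials: "has_continuous_partials \<Omega> f fx fy" and "open I" "c > 0"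
    and on_graph: "\<And>s. s \<in> I \<Longrightarrow> (s, g s) \<in> \<Omega> \<and> f (s, g s) = 0 \<and> c \<le> fy (s, g s)"
    and lip: "\<And>s1 s2. s1 \<in> I \<Longrightarrow> s2 \<in> I \<Longrightarrow> \<bar>g s2 - g s1\<bar> \<le> K * \<bar>s2 - s1\<bar>"
  shows "\<And>s. s \<in> I \<Longrightarrow> (g has_real_derivative - fx (s, g s) / fy (s, g s)) (at s)"
    and "continuous_on I (\<lambda>s. - fx (s, g s) / fy (s, g s))"
proof -
  show deriv: "(g has_real_derivative - fx (s, g s) / fy (s, g s)) (at s)" if "s \<in> I" for s
  proof (rule implicit_function_DERIV)
    show "has_strict_gradient f (fx (s, g s), fy (s, g s)) (s, g s)"
      using has_continuous_partials_imp_strict_gradient[OF \<open>open \<Omega>\<close> partials] on_graph[OF that] by simp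
    show "fy (s, g s) \<noteq> 0"
      using on_graph[OF that] \<open>c > 0\<close> by simp
  qed (use that on_graph lip \<open>open I\<close> in auto)
  have "continuous_on I g"
    using deriv by (meson DERIV_isCont continuous_at_imp_continuous_on)
  then have graph_cont: "continuous_on I (\<lambda>s. (s, g s))"
    by (intro continuous_intros)
  have graph_sub: "(\<lambda>s. (s, g s)) ` I \<subseteq> \<Omega>"
    using on_graph by auto
  have "continuous_on \<Omega> fx" "continuous_on \<Omega> fy"
    using partials unfolding has_continuous_partials_def by auto
  then have "continuous_on I (\<lambda>s. fx (s, g s))" "continuous_on I (\<lambda>s. fy (s, g s))"
    using continuous_on_compose2[OF _ graph_cont graph_sub] by auto
  moreover have "fy (s, g s) \<noteq> 0" if "s \<in> I" for s
    using on_graph[OF that] \<open>c > 0\<close> by linarith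
  ultimately show "continuous_on I (\<lambda>s. - fx (s, g s) / fy (s, g s))"
    by (intro continuous_intros) auto
qed

lemma implicit_function_graph:
  assumes "open \<Omega>" "p0 \<in> \<Omega>" "f p0 = 0" "fy p0 \<noteq> 0" and partials: "has_continuous_partials \<Omega> f fx fy"
  obtains W a b g g' where "open W" "p0 \<in> W" "W \<subseteq> \<Omega>" "a < fst p0" "fst p0 < b"
    "\<And>t. t \<in> {a<..<b} \<Longrightarrow> (g has_real_derivative g' t) (at t)" "continuous_on {a<..<b} g'"
    "W \<inter> {p. f p = 0} = (\<lambda>t. (t, g t)) ` {a<..<b}"
proof -
  obtain x0 y0 where p0: "p0 = (x0, y0)" by (cases p0)
  define \<sigma> where "\<sigma> = sgn (fy p0)"
  define F where "F p = \<sigma> * f p" for p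
  define Fx where "Fx p = \<sigma> * fx p" for p
  define Fy where "Fy p = \<sigma> * fy p" for p
  have F_partials: "has_continuous_partials \<Omega> F Fx Fy"
    unfolding F_def Fx_def Fy_def by (rule has_continuous_partials_cmult[OF partials])
  have zero_iff: "F p = 0 \<longleftrightarrow> f p = 0" for p
    using \<open>fy p0 \<noteq> 0\<close> by (simp add: F_def \<sigma>_def sgn_if)
  have "Fy p0 > 0"
    using \<open>fy p0 \<noteq> 0\<close> by (simp add: Fy_def \<sigma>_def sgn_if)
  then obtain r where "r > 0" and box: "\<And>s t. \<bar>s - x0\<bar> \<le> r \<Longrightarrow> \<bar>t - y0\<bar> \<le> r \<Longrightarrow>
      (s, t) \<in> \<Omega> \<and> Fy p0 / 2 \<le> Fy (s, t) \<and> \<bar>Fx (s, t)\<bar> \<le> \<bar>Fx p0\<bar> + 1"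
    using continuous_partials_box_bounds[OF assms(1,2) F_partials] by (auto simp: p0)
  define c where "c = Fy p0 / 2"
  define K where "K = \<bar>Fx p0\<bar> + 1"
  have "c > 0" "K > 0"
    using \<open>Fy p0 > 0\<close> by (simp_all add: c_def K_def add_nonneg_pos)
  have box': "(s, t) \<in> \<Omega> \<and> c \<le> Fy (s, t) \<and> \<bar>Fx (s, t)\<bar> \<le> K" if "\<bar>s - x0\<bar> \<le> r" "\<bar>t - y0\<bar> \<le> r" for s t
    using box[OF that] by (simp add: c_def K_def)
  have mono: "c * (t2 - t1) \<le> F (s, t2) - F (s, t1)"
    if "\<bar>s - x0\<bar> \<le> r" "\<bar>t1 - y0\<bar> \<le> r" "\<bar>t2 - y0\<bar> \<le> r" "t1 \<le> t2" for s t1 t2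
    using box_partials_monotone_Lipschitz(1)[OF F_partials box' that] .
  have lip: "\<bar>F (s2, t) - F (s1, t)\<bar> \<le> K * \<bar>s2 - s1\<bar>"
    if "\<bar>s1 - x0\<bar> \<le> r" "\<bar>s2 - x0\<bar> \<le> r" "\<bar>t - y0\<bar> \<le> r" for s1 s2 t
    using box_partials_monotone_Lipschitz(2)[OF F_partials box' that] .
  have cont: "continuous_on {y0 - r..y0 + r} (\<lambda>t. F (s, t))" if "\<bar>s - x0\<bar> \<le> r" for s
    using box_partials_monotone_Lipschitz(3)[OF F_partials box' that] .
  have "F (x0, y0) = 0"
    using \<open>f p0 = 0\<close> by (simp add: F_def p0)
  obtain \<tau> g where "0 < \<tau>" "\<tau> \<le> r"
    and graph: "\<And>s. \<bar>s - x0\<bar> < \<tau> \<Longrightarrow> \<bar>g s - y0\<bar> < r \<and> F (s, g s) = 0"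
    and unique: "\<And>s t. \<bar>s - x0\<bar> < \<tau> \<Longrightarrow> \<bar>t - y0\<bar> < r \<Longrightarrow> F (s, t) = 0 \<Longrightarrow> t = g s"
    and g_lip: "\<And>s1 s2. \<bar>s1 - x0\<bar> < \<tau> \<Longrightarrow> \<bar>s2 - x0\<bar> < \<tau> \<Longrightarrow> c * \<bar>g s2 - g s1\<bar> \<le> K * \<bar>s2 - s1\<bar>"
    using implicit_graph_on_box[OF \<open>r > 0\<close> \<open>c > 0\<close> \<open>K > 0\<close> \<open>F (x0, y0) = 0\<close> mono lip cont] by blast
  define I where "I = {x0 - \<tau><..<x0 + \<tau>}"
  have I: "s \<in> I \<longleftrightarrow> \<bar>s - x0\<bar> < \<tau>" for s
    by (auto simp: I_def abs_less_iff)
  have on_graph: "(s, g s) \<in> \<Omega> \<and> F (s, g s) = 0 \<and> c \<le> Fy (s, g s)" if "s \<in> I" for s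
    using box[of s "g s"] graph[of s] that \<open>\<tau> \<le> r\<close> by (auto simp: I c_def)
  have g_Lipschitz: "\<bar>g s2 - g s1\<bar> \<le> K / c * \<bar>s2 - s1\<bar>" if "s1 \<in> I" "s2 \<in> I" for s1 s2
    using g_lip[of s1 s2] that \<open>c > 0\<close> by (simp add: I field_simps)
  have "open I"
    by (simp add: I_def)
  note C1 = Lipschitz_implicit_function_C1[OF \<open>open \<Omega>\<close> F_partials \<open>open I\<close> \<open>c > 0\<close> on_graph g_Lipschitz]
  define W where "W = I \<times> {y0 - r<..<y0 + r}"
  have "W \<subseteq> \<Omega>"
  proof
    fix q assume "q \<in> W"
    then have "\<bar>fst q - x0\<bar> \<le> r" "\<bar>snd q - y0\<bar> \<le> r"
      using \<open>\<tau> \<le> r\<close> by (auto simp: W_def I_def abs_le_iff)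
    then show "q \<in> \<Omega>"
      using box[of "fst q" "snd q"] by simp
  qed
  have zero_set: "W \<inter> {p. f p = 0} = (\<lambda>t. (t, g t)) ` I"
  proof (intro equalityI subsetI)
    fix q assume "q \<in> W \<inter> {p. f p = 0}"
    then have "fst q \<in> I" "\<bar>snd q - y0\<bar> < r" "F (fst q, snd q) = 0"
      by (auto simp: W_def zero_iff abs_less_iff)
    then have "snd q = g (fst q)"
      using unique[of "fst q" "snd q"] by (simp add: I)
    then show "q \<in> (\<lambda>t. (t, g t)) ` I"
      using \<open>fst q \<in> I\<close> by (intro image_eqI[of _ _ "fst q"]) (auto simp: prod_eq_iff)
  next
    fix q assume "q \<in> (\<lambda>t. (t, g t)) ` I"
    then obtain s where "s \<in> I" "q = (s, g s)" by blast
    then show "q \<in> W \<inter> {p. f p = 0}"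
      using graph[of s] by (auto simp: W_def I zero_iff[symmetric] abs_less_iff)
  qed
  have "open W" "p0 \<in> W"
    using \<open>0 < \<tau>\<close> \<open>r > 0\<close> by (simp_all add: W_def I_def p0 open_Times)
  then show ?thesis
    using \<open>W \<subseteq> \<Omega>\<close> \<open>0 < \<tau>\<close> C1 zero_set
    by (intro that[of W "x0 - \<tau>" "x0 + \<tau>" g "\<lambda>s. - Fx (s, g s) / Fy (s, g s)"]) (simp_all add: I_def p0)
qed

lemma C1_curve_graph:
  assumes "a < b" and deriv: "\<And>t. t \<in> {a<..<b} \<Longrightarrow> (g has_real_derivative g' t) (at t)"
    and "continuous_on {a<..<b} g'"
  shows "C1_curve (\<lambda>t. (t, g t)) a b"
  unfolding C1_curve_def
proof (intro conjI ballI)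
  have D: "((\<lambda>t. (t, g t)) has_vector_derivative (1, g' t)) (at t)" if "t \<in> {a<..<b}" for t
    using deriv[OF that] by (auto intro!: has_vector_derivative_Pair simp: has_real_derivative_iff_has_vector_derivative)
  show "(\<lambda>t. (t, g t)) C1_differentiable_on {a<..<b}"
    unfolding C1_differentiable_on_def using D \<open>continuous_on {a<..<b} g'\<close>
    by (intro exI[of _ "\<lambda>t. (1, g' t)"]) (auto intro: continuous_intros)
  show "vector_derivative (\<lambda>t. (t, g t)) (at t) \<noteq> 0" if "t \<in> {a<..<b}" for t
    using vector_derivative_at[OF D[OF that]] by (simp add: zero_prod_def)
  show "inj_on (\<lambda>t. (t, g t)) {a<..<b}"
    by (auto simp: inj_on_def)
  have "continuous_on ((\<lambda>t. (t, g t)) ` {a<..<b}) fst"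
    by (rule continuous_on_fst[OF continuous_on_id])
  then show "continuous_on ((\<lambda>t. (t, g t)) ` {a<..<b}) (inv_into {a<..<b} (\<lambda>t. (t, g t)))"
    by (rule continuous_on_eq) (auto intro!: inv_into_f_f[symmetric] simp: inj_on_def)
qed (fact \<open>a < b\<close>)

lemma C1_curve_swap:
  assumes "C1_curve \<gamma> a b"
  shows "C1_curve (\<lambda>t. prod.swap (\<gamma> t)) a b"
proof -
  let ?I = "{a<..<b}"
  obtain D where D: "\<And>t. t \<in> ?I \<Longrightarrow> (\<gamma> has_vector_derivative D t) (at t)" and "continuous_on ?I D"
    using assms unfolding C1_curve_def C1_differentiable_on_def by blast
  have swapD: "((\<lambda>t. prod.swap (\<gamma> t)) has_vector_derivative prod.swap (D t)) (at t)" if "t \<in> ?I" for t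
  proof -
    note \<gamma>' = D[OF that, unfolded has_vector_derivative_def]
    have "((\<lambda>t. snd (\<gamma> t)) has_vector_derivative snd (D t)) (at t)"
      and "((\<lambda>t. fst (\<gamma> t)) has_vector_derivative fst (D t)) (at t)"
      using has_derivative_snd[OF \<gamma>'] has_derivative_fst[OF \<gamma>'] by (simp_all add: has_vector_derivative_def)
    from has_vector_derivative_Pair[OF this] show ?thesis
      by (simp add: prod.swap_def)
  qed
  have inj: "inj_on \<gamma> ?I" and inv_cont: "continuous_on (\<gamma> ` ?I) (inv_into ?I \<gamma>)"
    and nonzero: "\<And>t. t \<in> ?I \<Longrightarrow> vector_derivative \<gamma> (at t) \<noteq> 0"
    using assms unfolding C1_curve_def by blast+
  have inj_swap: "inj_on (\<lambda>t. prod.swap (\<gamma> t)) ?I"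
    using inj by (auto simp: inj_on_def prod.swap_def prod_eq_iff)
  have "inv_into ?I \<gamma> (prod.swap q) = inv_into ?I (\<lambda>t. prod.swap (\<gamma> t)) q" if q: "q \<in> (\<lambda>t. prod.swap (\<gamma> t)) ` ?I" for q
  proof -
    obtain t where "t \<in> ?I" "q = prod.swap (\<gamma> t)"
      using q by blast
    then show ?thesis
      using inv_into_f_f[OF inj_swap, of t] inv_into_f_f[OF inj, of t] by simp
  qed
  moreover have "continuous_on ((\<lambda>t. prod.swap (\<gamma> t)) ` ?I) (\<lambda>q. inv_into ?I \<gamma> (prod.swap q))"
    by (rule continuous_on_compose2[OF inv_cont continuous_on_swap]) auto
  ultimately have inv_cont_swap: "continuous_on ((\<lambda>t. prod.swap (\<gamma> t)) ` ?I) (inv_into ?I (\<lambda>t. prod.swap (\<gamma> t)))"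
    by (rule continuous_on_eq[rotated])
  have "continuous_on ?I (\<lambda>t. prod.swap (D t))"
    by (rule continuous_on_compose2[OF continuous_on_swap \<open>continuous_on ?I D\<close>]) auto
  then have "(\<lambda>t. prod.swap (\<gamma> t)) C1_differentiable_on ?I"
    unfolding C1_differentiable_on_def using swapD by (intro exI[of _ "\<lambda>t. prod.swap (D t)"]) simp
  moreover have "vector_derivative (\<lambda>t. prod.swap (\<gamma> t)) (at t) \<noteq> 0" if "t \<in> ?I" for t
  proof -
    have "vector_derivative (\<lambda>t. prod.swap (\<gamma> t)) (at t) = prod.swap (vector_derivative \<gamma> (at t))"
      using vector_derivative_at[OF swapD[OF that]] vector_derivative_at[OF D[OF that]] by simp
    with nonzero[OF that] show ?thesis
      by (metis swap_simp zero_prod_def surj_pair)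
  qed
  ultimately show ?thesis
    using assms inj_swap inv_cont_swap unfolding C1_curve_def by (intro conjI ballI) simp_all
qed

lemma zero_set_locally_C1_curve:
  assumes "open \<Omega>" "p0 \<in> \<Omega>" "f p0 = 0" "fx p0 \<noteq> 0 \<or> fy p0 \<noteq> 0"
    and partials: "has_continuous_partials \<Omega> f fx fy"
  obtains W \<gamma> a b where "open W" "p0 \<in> W" "W \<subseteq> \<Omega>" "C1_curve \<gamma> a b" "p0 \<in> \<gamma> ` {a<..<b}"
    "W \<inter> {p. f p = 0} = \<gamma> ` {a<..<b}"
proof (cases "fy p0 = 0")
  case False
  obtain W a b g g' where W: "open W" "p0 \<in> W" "W \<subseteq> \<Omega>" "a < fst p0" "fst p0 < b"
    "\<And>t. t \<in> {a<..<b} \<Longrightarrow> (g has_real_derivative g' t) (at t)" "continuous_on {a<..<b} g'"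
    "W \<inter> {p. f p = 0} = (\<lambda>t. (t, g t)) ` {a<..<b}"
    using implicit_function_graph[OF assms(1-3) False partials] by blast
  moreover have "p0 \<in> (\<lambda>t. (t, g t)) ` {a<..<b}"
    using W(2,8) \<open>f p0 = 0\<close> by blast
  moreover have "C1_curve (\<lambda>t. (t, g t)) a b"
    using W(4-7) by (intro C1_curve_graph) auto
  ultimately show ?thesis
    by (intro that[of W "\<lambda>t. (t, g t)" a b])
next
  case True
  let ?\<Omega> = "prod.swap -` \<Omega>"
  have "open ?\<Omega>"
    using \<open>open \<Omega>\<close> by (intro open_vimage) (auto intro: continuous_intros)
  have p0': "prod.swap p0 \<in> ?\<Omega>" "f (prod.swap (prod.swap p0)) = 0" "fx (prod.swap (prod.swap p0)) \<noteq> 0"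
    using assms(2-4) True by simp_all
  obtain W' a b g g' where W': "open W'" "prod.swap p0 \<in> W'" "W' \<subseteq> ?\<Omega>"
    "a < fst (prod.swap p0)" "fst (prod.swap p0) < b"
    "\<And>t. t \<in> {a<..<b} \<Longrightarrow> (g has_real_derivative g' t) (at t)" "continuous_on {a<..<b} g'"
    "W' \<inter> {p. f (prod.swap p) = 0} = (\<lambda>t. (t, g t)) ` {a<..<b}"
    using implicit_function_graph[OF \<open>open ?\<Omega>\<close> p0' has_continuous_partials_swap[OF partials]] by blast
  define W where "W = prod.swap -` W'"
  have "q \<in> W \<inter> {p. f p = 0} \<longleftrightarrow> q \<in> (\<lambda>t. prod.swap (t, g t)) ` {a<..<b}" for q
  proof -
    have "q \<in> W \<inter> {p. f p = 0} \<longleftrightarrow> prod.swap q \<in> W' \<inter> {p. f (prod.swap p) = 0}"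
      by (simp add: W_def)
    also have "\<dots> \<longleftrightarrow> prod.swap q \<in> (\<lambda>t. (t, g t)) ` {a<..<b}"
      unfolding W'(8) ..
    also have "\<dots> \<longleftrightarrow> q \<in> (\<lambda>t. prod.swap (t, g t)) ` {a<..<b}"
      by (cases q) (auto simp: image_iff)
    finally show ?thesis .
  qed
  then have "W \<inter> {p. f p = 0} = (\<lambda>t. prod.swap (t, g t)) ` {a<..<b}"
    by blast
  moreover have "open W" "p0 \<in> W" "W \<subseteq> \<Omega>"
    using W'(1-3) by (auto simp: W_def intro!: open_vimage continuous_intros)
  moreover have "C1_curve (\<lambda>t. prod.swap (t, g t)) a b"
    using W'(4-7) by (intro C1_curve_swap C1_curve_graph) auto
  ultimately show ?thesis
    using \<open>f p0 = 0\<close> by (intro that[of W "\<lambda>t. prod.swap (t, g t)" a b]) auto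
qed

lemma C1_curve_islimpt_image:
  assumes "C1_curve \<gamma> a b" "t \<in> {a<..<b}"
  shows "\<gamma> t islimpt \<gamma> ` {a<..<b}"
  unfolding islimpt_approachable
proof (intro allI impI)
  fix e :: real assume "e > 0"
  have "continuous_on {a<..<b} \<gamma>" and inj: "inj_on \<gamma> {a<..<b}"
    using assms(1) C1_differentiable_imp_continuous_on unfolding C1_curve_def by auto
  then have "isCont \<gamma> t"
    using assms(2) by (simp add: continuous_on_eq_continuous_at)
  then obtain d where "d > 0" and d: "\<And>s. dist s t < d \<Longrightarrow> dist (\<gamma> s) (\<gamma> t) < e"
    using \<open>e > 0\<close> unfolding continuous_at_eps_delta by blast
  define \<mu> where "\<mu> = min d (b - t)"
  have "0 < \<mu>" "\<mu> \<le> d" "\<mu> \<le> b - t"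
    using assms(2) \<open>d > 0\<close> by (auto simp: \<mu>_def)
  define s where "s = t + \<mu> / 2"
  have "s \<in> {a<..<b}" "s \<noteq> t" "dist s t < d"
    using assms(2) \<open>0 < \<mu>\<close> \<open>\<mu> \<le> d\<close> \<open>\<mu> \<le> b - t\<close> by (auto simp: s_def dist_real_def)
  then show "\<exists>x'\<in>\<gamma> ` {a<..<b}. x' \<noteq> \<gamma> t \<and> dist x' (\<gamma> t) < e"
    using d inj assms(2) by (intro bexI[of _ "\<gamma> s"]) (auto simp: inj_on_def)
qed

section \<open>The singular set and the curvature\<close>

definition hgrad :: "(real \<times> real \<Rightarrow> real) \<Rightarrow> real \<times> real \<Rightarrow> real \<times> real" where
  "hgrad u p = (px u p - snd p, py u p + fst p)"

lemma sing_set_hgrad: "sing_set \<Omega> u = {p \<in> \<Omega>. hgrad u p = 0}"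
  by (auto simp: sing_set_def hgrad_def zero_prod_def)

lemma C2_on_partials:
  assumes "C2_on \<Omega> u"
  shows "has_continuous_partials \<Omega> u (px u) (py u)"
    and "has_continuous_partials \<Omega> (px u) (px (px u)) (py (px u))"
    and "has_continuous_partials \<Omega> (py u) (px (py u)) (py (py u))"
  using assms
  by (auto simp: has_continuous_partials_def C2_on_def has_px_def has_py_def px_def py_def
      DERIV_deriv_iff_real_differentiable)

lemma hgrad_partials:
  assumes "C2_on \<Omega> u"
  shows "has_continuous_partials \<Omega> (\<lambda>p. fst (hgrad u p)) (px (px u)) (\<lambda>p. py (px u) p - 1)"
    and "has_continuous_partials \<Omega> (\<lambda>p. snd (hgrad u p)) (\<lambda>p. px (py u) p + 1) (py (py u))"
  using C2_on_partials(2,3)[OF assms]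
  by (auto simp: has_continuous_partials_def hgrad_def intro!: derivative_eq_intros continuous_intros)

lemma hgrad_lincomb_partials:
  assumes "C2_on \<Omega> u"
  shows "has_continuous_partials \<Omega> (\<lambda>q. a1 * fst (hgrad u q) + a2 * snd (hgrad u q))
    (\<lambda>q. a1 * px (px u) q + a2 * (px (py u) q + 1)) (\<lambda>q. a1 * (py (px u) q - 1) + a2 * py (py u) q)"
  using has_continuous_partials_add[OF has_continuous_partials_cmult[OF hgrad_partials(1)[OF assms]]
      has_continuous_partials_cmult[OF hgrad_partials(2)[OF assms]]] .

lemma C2_on_mixed_partials_eq:
  assumes "open \<Omega>" "C2_on \<Omega> u" "p \<in> \<Omega>"
  shows "px (py u) p = py (px u) p"
  using mixed_partials_eq[OF assms(1,3) has_continuous_partialsD[OF C2_on_partials(1)[OF assms(2)]]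
      has_continuous_partials_imp_strict_gradient[OF assms(1) C2_on_partials(2)[OF assms(2)] assms(3)]
      has_continuous_partials_imp_strict_gradient[OF assms(1) C2_on_partials(3)[OF assms(2)] assms(3)]]
  by simp

text \<open>The Hessian of \<open>u\<close> at \<open>p\<close> evaluated on the rotated vector \<open>(snd X, - fst X)\<close>,
  with the mixed derivative symmetrised.\<close>

definition hess_form :: "(real \<times> real \<Rightarrow> real) \<Rightarrow> real \<times> real \<Rightarrow> real \<times> real \<Rightarrow> real" where
  "hess_form u p X = px (px u) p * (snd X)\<^sup>2 - (px (py u) p + py (px u) p) * fst X * snd X
     + py (py u) p * (fst X)\<^sup>2"

lemma Hcurv_eq:
  assumes C2: "C2_on \<Omega> u" and "p \<in> \<Omega>" and "hgrad u p \<noteq> 0"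
  shows "Hcurv u p = hess_form u p (hgrad u p) / norm (hgrad u p) ^ 3"
proof -
  obtain x y where p: "p = (x, y)" by (cases p)
  define X1 where "X1 = px u p - y"
  define X2 where "X2 = py u p + x"
  have norm: "norm (hgrad u p) = sqrt (X1\<^sup>2 + X2\<^sup>2)"
    by (simp add: hgrad_def norm_Pair p X1_def X2_def)
  have nonzero: "X1\<^sup>2 + X2\<^sup>2 > 0"
    using assms(3) by (auto simp: hgrad_def p X1_def X2_def zero_prod_def add_pos_nonneg add_nonneg_pos)
  note partials = has_continuous_partialsD[OF C2_on_partials(2)[OF C2] \<open>p \<in> \<Omega>\<close>]
    has_continuous_partialsD[OF C2_on_partials(3)[OF C2] \<open>p \<in> \<Omega>\<close>]
  have d1: "((\<lambda>t. px u (t, y) - y) has_real_derivative px (px u) p) (at x)"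
    and d2: "((\<lambda>t. py u (t, y) + t) has_real_derivative px (py u) p + 1) (at x)"
    and d3: "((\<lambda>t. px u (x, t) - t) has_real_derivative py (px u) p - 1) (at y)"
    and d4: "((\<lambda>t. py u (x, t) + x) has_real_derivative py (py u) p) (at y)"
    using partials by (auto simp: p intro!: derivative_eq_intros)
  have "((\<lambda>t. N1 u (t, y)) has_real_derivative
      X2 * (X2 * px (px u) p - X1 * (px (py u) p + 1)) / (sqrt (X1\<^sup>2 + X2\<^sup>2)) ^ 3) (at x)"
    using DERIV_normalized_component[OF d1 d2] nonzero by (simp add: N1_def p X1_def X2_def)
  then have Nx: "px (N1 u) p = X2 * (X2 * px (px u) p - X1 * (px (py u) p + 1)) / (sqrt (X1\<^sup>2 + X2\<^sup>2)) ^ 3"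
    by (simp add: px_def p DERIV_imp_deriv)
  have "((\<lambda>t. N2 u (x, t)) has_real_derivative
      X1 * (X1 * py (py u) p - X2 * (py (px u) p - 1)) / (sqrt (X2\<^sup>2 + X1\<^sup>2)) ^ 3) (at y)"
    using DERIV_normalized_component[OF d4 d3] nonzero by (simp add: N2_def p X1_def X2_def add.commute)
  then have Ny: "py (N2 u) p = X1 * (X1 * py (py u) p - X2 * (py (px u) p - 1)) / (sqrt (X1\<^sup>2 + X2\<^sup>2)) ^ 3"
    by (simp add: py_def p DERIV_imp_deriv add.commute)
  show ?thesis
    unfolding Hcurv_def Nx Ny norm
    by (simp add: hess_form_def hgrad_def p X1_def X2_def add_divide_distrib[symmetric] algebra_simps power2_eq_square)
qed

lemma abs_quadratic_form_le:
  fixes A B C x y :: real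
  shows "\<bar>A * y\<^sup>2 - B * x * y + C * x\<^sup>2\<bar> \<le> (\<bar>A\<bar> + \<bar>B\<bar> + \<bar>C\<bar>) * (x\<^sup>2 + y\<^sup>2)"
proof -
  have "2 * (\<bar>x\<bar> * \<bar>y\<bar>) \<le> x\<^sup>2 + y\<^sup>2"
    using sum_squares_bound[of "\<bar>x\<bar>" "\<bar>y\<bar>"] by (simp add: mult.assoc)
  moreover have "0 \<le> \<bar>x\<bar> * \<bar>y\<bar>"
    by simp
  ultimately have xy: "\<bar>x * y\<bar> \<le> x\<^sup>2 + y\<^sup>2"
    unfolding abs_mult by linarith
  have "\<bar>A * y\<^sup>2 - B * x * y + C * x\<^sup>2\<bar> \<le> \<bar>A * y\<^sup>2\<bar> + \<bar>B * x * y\<bar> + \<bar>C * x\<^sup>2\<bar>"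
    using abs_triangle_ineq[of "A * y\<^sup>2 - B * x * y" "C * x\<^sup>2"] abs_triangle_ineq4[of "A * y\<^sup>2" "B * x * y"]
    by linarith
  also have "\<dots> = \<bar>A\<bar> * y\<^sup>2 + \<bar>B\<bar> * \<bar>x * y\<bar> + \<bar>C\<bar> * x\<^sup>2"
    by (simp add: abs_mult)
  also have "\<dots> \<le> \<bar>A\<bar> * (x\<^sup>2 + y\<^sup>2) + \<bar>B\<bar> * (x\<^sup>2 + y\<^sup>2) + \<bar>C\<bar> * (x\<^sup>2 + y\<^sup>2)"
    using xy by (intro add_mono mult_left_mono) auto
  finally show ?thesis
    by (simp add: algebra_simps)
qed

lemma hess_form_diff_le:
  "\<bar>hess_form u p X - hess_form u q X\<bar> \<le>
     (\<bar>px (px u) p - px (px u) q\<bar> + \<bar>(px (py u) p + py (px u) p) - (px (py u) q + py (px u) q)\<bar>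
       + \<bar>py (py u) p - py (py u) q\<bar>) * (norm X)\<^sup>2"
proof -
  have "hess_form u p X - hess_form u q X =
      (px (px u) p - px (px u) q) * (snd X)\<^sup>2
      - ((px (py u) p + py (px u) p) - (px (py u) q + py (px u) q)) * fst X * snd X
      + (py (py u) p - py (py u) q) * (fst X)\<^sup>2"
    by (simp add: hess_form_def algebra_simps)
  moreover have "(norm X)\<^sup>2 = (fst X)\<^sup>2 + (snd X)\<^sup>2"
    by (cases X) (simp add: norm_Pair)
  ultimately show ?thesis
    using abs_quadratic_form_le by simp
qed

lemma Hcurv_bound_imp_hgrad_growth:
  assumes "open \<Omega>" and C2: "C2_on \<Omega> u" and p0: "p0 \<in> sing_set \<Omega> u" and "c > 0" "e > 0"
    and H: "\<forall>p\<in>ball p0 e \<inter> \<Omega>. p \<notin> sing_set \<Omega> u \<longrightarrow> \<bar>Hcurv u p\<bar> \<le> C / dist p p0"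
  obtains \<rho> where "\<rho> > 0" "ball p0 \<rho> \<subseteq> \<Omega>"
    "\<And>p. p \<in> ball p0 \<rho> \<Longrightarrow> hgrad u p \<noteq> 0 \<Longrightarrow> c * (norm (hgrad u p))\<^sup>2 \<le> \<bar>hess_form u p0 (hgrad u p)\<bar> \<Longrightarrow>
       c * dist p p0 \<le> 2 * C * norm (hgrad u p)"
proof -
  have "p0 \<in> \<Omega>" "hgrad u p0 = 0"
    using p0 by (auto simp: sing_set_hgrad)
  obtain d where "d > 0" "ball p0 d \<subseteq> \<Omega>"
    using \<open>open \<Omega>\<close> \<open>p0 \<in> \<Omega>\<close> open_contains_ball by blast
  define \<phi> where "\<phi> p = \<bar>px (px u) p - px (px u) p0\<bar>
      + \<bar>(px (py u) p + py (px u) p) - (px (py u) p0 + py (px u) p0)\<bar> + \<bar>py (py u) p - py (py u) p0\<bar>" for p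
  have "continuous_on \<Omega> \<phi>"
    using C2 unfolding \<phi>_def C2_on_def by (auto intro!: continuous_intros)
  then obtain d' where "d' > 0" "\<forall>p\<in>\<Omega>. dist p p0 < d' \<longrightarrow> dist (\<phi> p) (\<phi> p0) < c / 2"
    using \<open>p0 \<in> \<Omega>\<close> \<open>c > 0\<close> unfolding continuous_on_iff by (meson half_gt_zero)
  then have \<phi>_small: "\<And>p. p \<in> \<Omega> \<Longrightarrow> dist p p0 < d' \<Longrightarrow> \<phi> p < c / 2"
    by (simp add: \<phi>_def dist_real_def)
  define \<rho> where "\<rho> = min e (min d d')"
  show ?thesis
  proof (rule that[of \<rho>])
    show "\<rho> > 0" "ball p0 \<rho> \<subseteq> \<Omega>"
      using \<open>e > 0\<close> \<open>d > 0\<close> \<open>d' > 0\<close> \<open>ball p0 d \<subseteq> \<Omega>\<close> by (auto simp: \<rho>_def)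
    fix p assume p: "p \<in> ball p0 \<rho>" and "hgrad u p \<noteq> 0"
      and growth: "c * (norm (hgrad u p))\<^sup>2 \<le> \<bar>hess_form u p0 (hgrad u p)\<bar>"
    define N where "N = norm (hgrad u p)"
    have "N > 0" using \<open>hgrad u p \<noteq> 0\<close> by (simp add: N_def)
    have "p \<in> \<Omega>" "dist p p0 < d'" "dist p p0 < e"
      using p \<open>ball p0 d \<subseteq> \<Omega>\<close> by (auto simp: \<rho>_def dist_commute)
    have "p \<noteq> p0" using \<open>hgrad u p \<noteq> 0\<close> \<open>hgrad u p0 = 0\<close> by auto
    then have "dist p p0 > 0" by simp
    have "\<bar>hess_form u p (hgrad u p) - hess_form u p0 (hgrad u p)\<bar> \<le> \<phi> p * N\<^sup>2"
      using hess_form_diff_le[of u p "hgrad u p" p0] by (simp add: \<phi>_def N_def)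
    also have "\<dots> \<le> c / 2 * N\<^sup>2"
      using \<phi>_small[OF \<open>p \<in> \<Omega>\<close> \<open>dist p p0 < d'\<close>] by (intro mult_right_mono) auto
    finally have "c / 2 * N\<^sup>2 \<le> \<bar>hess_form u p (hgrad u p)\<bar>"
      using growth unfolding N_def by linarith
    also have "\<dots> = \<bar>Hcurv u p\<bar> * N ^ 3"
      using Hcurv_eq[OF C2 \<open>p \<in> \<Omega>\<close> \<open>hgrad u p \<noteq> 0\<close>] \<open>N > 0\<close> by (simp add: N_def abs_divide)
    also have "\<dots> \<le> C / dist p p0 * N ^ 3"
      using H \<open>p \<in> \<Omega>\<close> \<open>dist p p0 < e\<close> \<open>hgrad u p \<noteq> 0\<close> \<open>N > 0\<close>
      by (intro mult_right_mono) (auto simp: sing_set_hgrad dist_commute)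
    finally have "c / 2 * N\<^sup>2 * dist p p0 \<le> C * N ^ 3"
      using \<open>dist p p0 > 0\<close> by (simp add: field_simps)
    then have "(c * dist p p0) * N\<^sup>2 \<le> (2 * C * N) * N\<^sup>2"
      by (simp add: power2_eq_square power3_eq_cube algebra_simps)
    then show "c * dist p p0 \<le> 2 * C * norm (hgrad u p)"
      using \<open>N > 0\<close> by (simp add: N_def)
  qed
qed

lemma sing_set_not_islimpt:
  assumes "open \<Omega>" and C2: "C2_on \<Omega> u" and p0: "p0 \<in> sing_set \<Omega> u" and "detU u p0 \<noteq> 0"
  shows "\<not> p0 islimpt sing_set \<Omega> u"
proof -
  have "p0 \<in> \<Omega>" using p0 by (simp add: sing_set_def)
  have "\<exists>\<delta>>0. \<forall>q\<in>ball p0 \<delta>. fst (hgrad u q) = 0 \<and> snd (hgrad u q) = 0 \<longrightarrow> q = p0"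
  proof (rule strict_gradients_isolated_common_zero)
    show "has_strict_gradient (\<lambda>q. fst (hgrad u q)) (px (px u) p0, py (px u) p0 - 1) p0"
      and "has_strict_gradient (\<lambda>q. snd (hgrad u q)) (px (py u) p0 + 1, py (py u) p0) p0"
      using has_continuous_partials_imp_strict_gradient[OF \<open>open \<Omega>\<close> hgrad_partials(1)[OF C2] \<open>p0 \<in> \<Omega>\<close>]
        has_continuous_partials_imp_strict_gradient[OF \<open>open \<Omega>\<close> hgrad_partials(2)[OF C2] \<open>p0 \<in> \<Omega>\<close>]
      by auto
    show "fst (hgrad u p0) = 0" "snd (hgrad u p0) = 0"
      using p0 by (simp_all add: sing_set_hgrad)
    show "px (px u) p0 * py (py u) p0 - (py (px u) p0 - 1) * (px (py u) p0 + 1) \<noteq> 0"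
      using \<open>detU u p0 \<noteq> 0\<close> C2_on_mixed_partials_eq[OF \<open>open \<Omega>\<close> C2 \<open>p0 \<in> \<Omega>\<close>] by (simp add: detU_def)
  qed
  then obtain \<delta> where "\<delta> > 0"
    and isolated: "\<forall>q\<in>ball p0 \<delta>. fst (hgrad u q) = 0 \<and> snd (hgrad u q) = 0 \<longrightarrow> q = p0"
    by blast
  show ?thesis
  proof
    assume "p0 islimpt sing_set \<Omega> u"
    then obtain q where "q \<in> sing_set \<Omega> u" "q \<noteq> p0" "dist q p0 < \<delta>"
      using \<open>\<delta> > 0\<close> unfolding islimpt_approachable by blast
    then show False
      using isolated by (simp add: sing_set_hgrad dist_commute)
  qed
qed

section \<open>Degenerate singular points\<close>

lemma singular_2x2_unit_left_null_vector:
  fixes m11 m12 m21 m22 :: real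
  assumes det: "m11 * m22 = m12 * m21" and "m12 \<noteq> m21"
  obtains b1 b2 where "b1\<^sup>2 + b2\<^sup>2 = 1" "b1 * m11 + b2 * m21 = 0" "b1 * m12 + b2 * m22 = 0"
    "b1 * (- b2 * m11 + b1 * m21) + b2 * (- b2 * m12 + b1 * m22) = m21 - m12"
proof -
  obtain v1 v2 where v: "v1 * m11 + v2 * m21 = 0" "v1 * m12 + v2 * m22 = 0" "v1\<^sup>2 + v2\<^sup>2 > 0"
  proof (cases "m11 = 0 \<and> m21 = 0")
    case True
    then have "m22\<^sup>2 + (- m12)\<^sup>2 > 0"
      using \<open>m12 \<noteq> m21\<close> by (simp add: add_nonneg_pos)
    then show ?thesis
      using True by (intro that[of m22 "- m12"]) (auto simp: algebra_simps)
  next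
    case False
    then have "m21\<^sup>2 + m11\<^sup>2 > 0"
      by (auto simp: add_pos_nonneg add_nonneg_pos)
    then show ?thesis
      using det by (intro that[of m21 "- m11"]) (auto simp: algebra_simps)
  qed
  define n where "n = sqrt (v1\<^sup>2 + v2\<^sup>2)"
  have "n > 0" and n2: "v1\<^sup>2 + v2\<^sup>2 = n\<^sup>2"
    using v(3) by (auto simp: n_def)
  have "(v1 / n)\<^sup>2 + (v2 / n)\<^sup>2 = (v1\<^sup>2 + v2\<^sup>2) / n\<^sup>2"
    by (simp add: power_divide add_divide_distrib)
  also have "\<dots> = 1"
    using \<open>n > 0\<close> by (simp add: n2)
  finally have unit: "(v1 / n)\<^sup>2 + (v2 / n)\<^sup>2 = 1" .
  have null: "v1 / n * m11 + v2 / n * m21 = 0" "v1 / n * m12 + v2 / n * m22 = 0"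
    using v(1,2) by (simp_all add: divide_simps)
  have ident: "b1 * (- b2 * m11 + b1 * m21) + b2 * (- b2 * m12 + b1 * m22)
      = (b1\<^sup>2 + b2\<^sup>2) * (m21 - m12) - b2 * (b1 * m11 + b2 * m21) + b1 * (b1 * m12 + b2 * m22)" for b1 b2
    by (simp add: power2_eq_square algebra_simps)
  have "v1 / n * (- (v2 / n) * m11 + v1 / n * m21) + v2 / n * (- (v2 / n) * m12 + v1 / n * m22) = m21 - m12"
    using ident[of "v1 / n" "v2 / n"] unfolding unit null by simp
  then show ?thesis
    by (rule that[OF unit null])
qed

lemma quadratic_form_of_rank_one:
  fixes m11 m12 m21 m22 b1 b2 x y :: real
  assumes unit: "b1\<^sup>2 + b2\<^sup>2 = 1" and null: "b1 * m11 + b2 * m21 = 0" "b1 * m12 + b2 * m22 = 0"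
  defines "w1 \<equiv> - b2 * m11 + b1 * m21" and "w2 \<equiv> - b2 * m12 + b1 * m22"
  shows "m11 * y\<^sup>2 - (m12 + m21) * x * y + m22 * x\<^sup>2
    = (b1 * x + b2 * y) * ((- b2 * w1 + b1 * w2) * (b1 * x + b2 * y) - (m21 - m12) * (- b2 * x + b1 * y))"
proof -
  have "(b1\<^sup>2 + b2\<^sup>2) * m11 = - b2 * w1 + b1 * (b1 * m11 + b2 * m21)"
    and "(b1\<^sup>2 + b2\<^sup>2) * m21 = b1 * w1 + b2 * (b1 * m11 + b2 * m21)"
    and "(b1\<^sup>2 + b2\<^sup>2) * m12 = - b2 * w2 + b1 * (b1 * m12 + b2 * m22)"
    and "(b1\<^sup>2 + b2\<^sup>2) * m22 = b1 * w2 + b2 * (b1 * m12 + b2 * m22)"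
    by (simp_all add: w1_def w2_def power2_eq_square algebra_simps)
  then have "m11 = - b2 * w1" "m21 = b1 * w1" "m12 = - b2 * w2" "m22 = b1 * w2"
    unfolding unit null by simp_all
  then have "m11 * y\<^sup>2 - (m12 + m21) * x * y + m22 * x\<^sup>2 = (b1 * x + b2 * y) * (w2 * x - w1 * y)"
    and "(- b2 * w1 + b1 * w2) * (b1 * x + b2 * y) - (m21 - m12) * (- b2 * x + b1 * y)
      = (b1\<^sup>2 + b2\<^sup>2) * (w2 * x - w1 * y)"
    by (simp_all add: power2_eq_square algebra_simps)
  then show ?thesis
    using unit by simp
qed

lemma norm_in_rotated_frame:
  fixes b1 b2 :: real and X :: "real \<times> real"
  assumes "b1\<^sup>2 + b2\<^sup>2 = 1"
  shows "norm X = sqrt ((- b2 * fst X + b1 * snd X)\<^sup>2 + (b1 * fst X + b2 * snd X)\<^sup>2)"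
proof -
  have "(- b2 * fst X + b1 * snd X)\<^sup>2 + (b1 * fst X + b2 * snd X)\<^sup>2 = (b1\<^sup>2 + b2\<^sup>2) * ((fst X)\<^sup>2 + (snd X)\<^sup>2)"
    by (simp add: power2_eq_square algebra_simps)
  then show ?thesis
    using assms by (simp add: norm_prod_def)
qed

lemma cone_bounds:
  fixes G h t :: real
  assumes "\<bar>G - t * h\<bar> \<le> \<bar>h\<bar> / 2"
  shows "h\<^sup>2 \<le> \<bar>h * ((2 * t + 2) * h - 2 * G)\<bar>" and "sqrt (G\<^sup>2 + h\<^sup>2) \<le> (\<bar>t\<bar> + 3 / 2) * \<bar>h\<bar>"
proof -
  have "\<bar>2 * h\<bar> - \<bar>2 * (G - t * h)\<bar> \<le> \<bar>2 * h - 2 * (G - t * h)\<bar>"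
    by (rule abs_triangle_ineq2)
  moreover have "\<bar>2 * h\<bar> = 2 * \<bar>h\<bar>" "\<bar>2 * (G - t * h)\<bar> = 2 * \<bar>G - t * h\<bar>"
    by (simp_all only: abs_mult abs_numeral)
  ultimately have "\<bar>h\<bar> \<le> \<bar>2 * h - 2 * (G - t * h)\<bar>"
    using assms by linarith
  also have "2 * h - 2 * (G - t * h) = (2 * t + 2) * h - 2 * G"
    by (simp add: algebra_simps)
  finally have "\<bar>h\<bar> \<le> \<bar>(2 * t + 2) * h - 2 * G\<bar>" .
  then have "\<bar>h\<bar> * \<bar>h\<bar> \<le> \<bar>h\<bar> * \<bar>(2 * t + 2) * h - 2 * G\<bar>"
    by (rule mult_left_mono) simp
  then show "h\<^sup>2 \<le> \<bar>h * ((2 * t + 2) * h - 2 * G)\<bar>"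
    by (simp add: abs_mult power2_eq_square)
  have "\<bar>G\<bar> \<le> \<bar>t\<bar> * \<bar>h\<bar> + \<bar>h\<bar> / 2"
    using assms abs_triangle_ineq2[of G "t * h"] by (simp add: abs_mult)
  then show "sqrt (G\<^sup>2 + h\<^sup>2) \<le> (\<bar>t\<bar> + 3 / 2) * \<bar>h\<bar>"
    using sqrt_sum_squares_le_sum_abs[of G h] by (simp add: algebra_simps)
qed

lemma ex_small_positive:
  fixes B1 B2 B3 K1 K2 K3 :: real
  assumes "B1 > 0" "B2 > 0" "B3 > 0"
  obtains \<epsilon> where "\<epsilon> > 0" "K1 * \<epsilon> < B1" "K2 * \<epsilon> < B2" "K3 * \<epsilon> < B3"
proof -
  have small: "\<forall>\<^sub>F \<epsilon> in at_right 0. K * \<epsilon> < B" if "B > 0" for K B :: real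
  proof -
    have "((\<lambda>\<epsilon>. K * \<epsilon>) \<longlongrightarrow> K * 0) (at_right 0)"
      by (intro tendsto_intros)
    then show ?thesis
      using order_tendstoD(2) that by fastforce
  qed
  have "\<forall>\<^sub>F \<epsilon> in at_right 0. 0 < \<epsilon> \<and> K1 * \<epsilon> < B1 \<and> K2 * \<epsilon> < B2 \<and> K3 * \<epsilon> < B3"
    using eventually_at_right_less[of "0::real"] small[OF \<open>B1 > 0\<close>] small[OF \<open>B2 > 0\<close>] small[OF \<open>B3 > 0\<close>]
    by (intro eventually_conj) auto
  then show ?thesis
    using eventually_happens'[OF trivial_limit_at_right_real] that by blast
qed

text \<open>If \<open>G q = 0\<close> but \<open>h q \<noteq> 0\<close>, the point \<open>p = q + (t * h q / (norm w)\<^sup>2) *\<^sub>R w\<close> lies in the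
  cone \<open>\<bar>G p - t * h p\<bar> \<le> \<theta> * \<bar>h p\<bar>\<close> at distance comparable to \<open>dist q p0\<close>, whereas
  \<open>\<bar>h p\<bar> = o(dist q p0)\<close> because \<open>h\<close> has zero gradient at \<open>p0\<close>.\<close>

lemma strict_gradient_flat_factor_vanishes:
  fixes G h :: "real \<times> real \<Rightarrow> real" and w :: "real \<times> real"
  assumes gradG: "has_strict_gradient G w p0" and gradh: "has_strict_gradient h 0 p0"
    and "G p0 = 0" "h p0 = 0" "w \<noteq> 0" "\<theta> > 0" "c > 0" "\<rho> > 0"
    and growth: "\<And>p. p \<in> ball p0 \<rho> \<Longrightarrow> h p \<noteq> 0 \<Longrightarrow> \<bar>G p - t * h p\<bar> \<le> \<theta> * \<bar>h p\<bar> \<Longrightarrow> c * dist p p0 \<le> \<bar>h p\<bar>"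
  obtains R where "R > 0" "\<And>q. q \<in> ball p0 R \<Longrightarrow> G q = 0 \<Longrightarrow> h q = 0"
proof -
  define L where "L = \<bar>t\<bar> / norm w"
  have "L \<ge> 0" by (simp add: L_def)
  obtain \<epsilon> where "0 < \<epsilon>" "3 * \<epsilon> < c" and \<epsilon>L: "2 * L * \<epsilon> < 1" "2 * L * (1 + \<bar>t\<bar>) * \<epsilon> < \<theta>"
    using ex_small_positive[of c 1 \<theta> 3 "2 * L" "2 * L * (1 + \<bar>t\<bar>)"] \<open>c > 0\<close> \<open>\<theta> > 0\<close> by auto
  obtain \<delta>G where "\<delta>G > 0" and linG: "\<forall>q\<in>ball p0 \<delta>G. \<forall>q'\<in>ball p0 \<delta>G. \<bar>G q - G q' - w \<bullet> (q - q')\<bar> \<le> \<epsilon> * dist q q'"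
    using gradG \<open>0 < \<epsilon>\<close> unfolding has_strict_gradient_def by blast
  obtain \<delta>h where "\<delta>h > 0" and linh: "\<forall>q\<in>ball p0 \<delta>h. \<forall>q'\<in>ball p0 \<delta>h. \<bar>h q - h q'\<bar> \<le> \<epsilon> * dist q q'"
    using gradh \<open>0 < \<epsilon>\<close> unfolding has_strict_gradient_def by auto
  define R where "R = min \<rho> (min \<delta>G \<delta>h) / 2"
  show ?thesis
  proof (rule that[of R])
    show "R > 0" using \<open>\<rho> > 0\<close> \<open>\<delta>G > 0\<close> \<open>\<delta>h > 0\<close> by (simp add: R_def)
    fix q assume "q \<in> ball p0 R" and "G q = 0"
    show "h q = 0"
    proof (rule ccontr)
      assume "h q \<noteq> 0"
      define h0 where "h0 = h q"
      define d where "d = dist q p0"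
      have "q \<noteq> p0" using \<open>h q \<noteq> 0\<close> \<open>h p0 = 0\<close> by auto
      then have "d > 0" by (simp add: d_def)
      have "d < R" using \<open>q \<in> ball p0 R\<close> by (simp add: d_def dist_commute)
      have "q \<in> ball p0 \<delta>h" "p0 \<in> ball p0 \<delta>h"
        using \<open>d < R\<close> \<open>\<delta>h > 0\<close> by (auto simp: R_def d_def dist_commute)
      then have "\<bar>h0\<bar> \<le> \<epsilon> * d"
        using linh \<open>h p0 = 0\<close> unfolding h0_def d_def by (metis diff_zero)
      define p where "p = q + (t * h0 / (norm w)\<^sup>2) *\<^sub>R w"
      have "dist p q = L * \<bar>h0\<bar>"
        using \<open>w \<noteq> 0\<close> by (simp add: p_def L_def dist_norm abs_mult power2_eq_square field_simps)
      have "L * \<bar>h0\<bar> \<le> L * (\<epsilon> * d)"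
        using \<open>\<bar>h0\<bar> \<le> \<epsilon> * d\<close> \<open>L \<ge> 0\<close> by (rule mult_left_mono)
      also have "\<dots> < d / 2"
        using \<epsilon>L(1) \<open>d > 0\<close> by (simp add: field_simps)
      finally have pq: "dist p q < d / 2" using \<open>dist p q = L * \<bar>h0\<bar>\<close> by simp
      have "dist p p0 < 3 / 2 * d" "d / 2 < dist p p0"
        using dist_triangle[of p p0 q] dist_triangle[of q p0 p] pq by (simp_all add: d_def dist_commute)
      then have "p \<in> ball p0 \<rho>" "p \<in> ball p0 \<delta>G" "p \<in> ball p0 \<delta>h" "q \<in> ball p0 \<delta>G"
        using \<open>d < R\<close> by (auto simp: R_def d_def dist_commute)
      have "w \<bullet> (p - q) = t * h0"
        using \<open>w \<noteq> 0\<close> by (simp add: p_def power2_norm_eq_inner)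
      define E where "E = \<epsilon> * (L * \<bar>h0\<bar>)"
      have "\<bar>G p - t * h0\<bar> \<le> E"
        using linG \<open>p \<in> ball p0 \<delta>G\<close> \<open>q \<in> ball p0 \<delta>G\<close> \<open>G q = 0\<close> \<open>w \<bullet> (p - q) = t * h0\<close>
          \<open>dist p q = L * \<bar>h0\<bar>\<close> by (force simp: E_def)
      have "\<bar>h p - h0\<bar> \<le> E"
        using linh \<open>p \<in> ball p0 \<delta>h\<close> \<open>q \<in> ball p0 \<delta>h\<close> \<open>dist p q = L * \<bar>h0\<bar>\<close> by (force simp: h0_def E_def)
      have "E \<le> \<bar>h0\<bar> / 2" "E * (1 + \<bar>t\<bar>) \<le> \<theta> / 2 * \<bar>h0\<bar>"
        using mult_right_mono[OF less_imp_le[OF \<epsilon>L(1)], of "\<bar>h0\<bar>"]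
          mult_right_mono[OF less_imp_le[OF \<epsilon>L(2)], of "\<bar>h0\<bar>"]
        by (simp_all add: E_def algebra_simps)
      have "\<bar>G p - t * h p\<bar> \<le> \<bar>G p - t * h0\<bar> + \<bar>t * (h p - h0)\<bar>"
        using abs_triangle_ineq4[of "G p - t * h0" "t * (h p - h0)"] by (simp add: algebra_simps)
      also have "\<dots> = \<bar>G p - t * h0\<bar> + \<bar>t\<bar> * \<bar>h p - h0\<bar>"
        by (simp add: abs_mult)
      also have "\<dots> \<le> E * (1 + \<bar>t\<bar>)"
        using \<open>\<bar>G p - t * h0\<bar> \<le> E\<close> mult_left_mono[OF \<open>\<bar>h p - h0\<bar> \<le> E\<close>, of "\<bar>t\<bar>"]
        by (simp add: algebra_simps)
      also have "\<dots> \<le> \<theta> * (\<bar>h0\<bar> / 2)"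
        using \<open>E * (1 + \<bar>t\<bar>) \<le> \<theta> / 2 * \<bar>h0\<bar>\<close> by simp
      also have "\<dots> \<le> \<theta> * \<bar>h p\<bar>"
        using \<open>\<bar>h p - h0\<bar> \<le> E\<close> \<open>E \<le> \<bar>h0\<bar> / 2\<close> \<open>\<theta> > 0\<close> by (intro mult_left_mono) auto
      finally have cone: "\<bar>G p - t * h p\<bar> \<le> \<theta> * \<bar>h p\<bar>" .
      have "h p \<noteq> 0" "\<bar>h p\<bar> \<le> 3 / 2 * \<bar>h0\<bar>"
        using \<open>\<bar>h p - h0\<bar> \<le> E\<close> \<open>E \<le> \<bar>h0\<bar> / 2\<close> \<open>h q \<noteq> 0\<close> by (auto simp: h0_def)
      then have "c * dist p p0 \<le> 3 / 2 * (\<epsilon> * d)"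
        using growth[OF \<open>p \<in> ball p0 \<rho>\<close> _ cone] \<open>\<bar>h0\<bar> \<le> \<epsilon> * d\<close> by linarith
      have "c * d \<le> c * (2 * dist p p0)"
        using \<open>d / 2 < dist p p0\<close> \<open>c > 0\<close> by (intro mult_left_mono) auto
      also have "\<dots> \<le> 3 * \<epsilon> * d"
        using \<open>c * dist p p0 \<le> 3 / 2 * (\<epsilon> * d)\<close> by simp
      also have "\<dots> < c * d"
        using \<open>3 * \<epsilon> < c\<close> \<open>d > 0\<close> by (simp add: mult_strict_right_mono)
      finally show False
        by simp
    qed
  qed
qed

text \<open>By Schwarz's theorem \<open>U - U\<^sup>T\<close> is twice the rotation by a right angle, so \<open>det U = 0\<close> forces
  \<open>U\<close> to have rank one; \<open>(b1, b2)\<close> spans its left kernel.\<close>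

lemma degenerate_sing_point_frame:
  assumes "open \<Omega>" and C2: "C2_on \<Omega> u" and "p0 \<in> \<Omega>" and "detU u p0 = 0"
  obtains b1 b2 \<kappa> where "b1\<^sup>2 + b2\<^sup>2 = 1"
    "has_strict_gradient (\<lambda>q. b1 * fst (hgrad u q) + b2 * snd (hgrad u q)) 0 p0"
    "- b2 * px (px u) p0 + b1 * (px (py u) p0 + 1) \<noteq> 0 \<or> - b2 * (py (px u) p0 - 1) + b1 * py (py u) p0 \<noteq> 0"
    "\<And>X. hess_form u p0 X = (b1 * fst X + b2 * snd X) * (\<kappa> * (b1 * fst X + b2 * snd X) - 2 * (- b2 * fst X + b1 * snd X))"
proof -
  define m11 where "m11 = px (px u) p0"
  define m12 where "m12 = py (px u) p0 - 1"
  define m21 where "m21 = px (py u) p0 + 1"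
  define m22 where "m22 = py (py u) p0"
  have mixed: "px (py u) p0 = py (px u) p0"
    using C2_on_mixed_partials_eq[OF \<open>open \<Omega>\<close> C2 \<open>p0 \<in> \<Omega>\<close>] .
  then have det: "m11 * m22 = m12 * m21" and skew: "m21 - m12 = 2"
    using \<open>detU u p0 = 0\<close> by (auto simp: m11_def m12_def m21_def m22_def detU_def algebra_simps)
  obtain b1 b2 where unit: "b1\<^sup>2 + b2\<^sup>2 = 1" and null: "b1 * m11 + b2 * m21 = 0" "b1 * m12 + b2 * m22 = 0"
    and "b1 * (- b2 * m11 + b1 * m21) + b2 * (- b2 * m12 + b1 * m22) = m21 - m12"
    using singular_2x2_unit_left_null_vector[OF det] skew by auto
  then have "- b2 * m11 + b1 * m21 \<noteq> 0 \<or> - b2 * m12 + b1 * m22 \<noteq> 0"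
    using skew by auto
  moreover have "has_strict_gradient (\<lambda>q. b1 * fst (hgrad u q) + b2 * snd (hgrad u q)) 0 p0"
    using has_continuous_partials_imp_strict_gradient[OF \<open>open \<Omega>\<close> hgrad_lincomb_partials[OF C2] \<open>p0 \<in> \<Omega>\<close>, of b1 b2] null
    by (simp add: m11_def m12_def m21_def m22_def zero_prod_def)
  moreover have "hess_form u p0 X = (b1 * fst X + b2 * snd X) *
      ((- b2 * (- b2 * m11 + b1 * m21) + b1 * (- b2 * m12 + b1 * m22)) * (b1 * fst X + b2 * snd X)
        - 2 * (- b2 * fst X + b1 * snd X))" for X
  proof -
    have "hess_form u p0 X = m11 * (snd X)\<^sup>2 - (m12 + m21) * fst X * snd X + m22 * (fst X)\<^sup>2"
      by (simp add: hess_form_def m11_def m12_def m21_def m22_def algebra_simps)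
    also have "\<dots> = (b1 * fst X + b2 * snd X) *
      ((- b2 * (- b2 * m11 + b1 * m21) + b1 * (- b2 * m12 + b1 * m22)) * (b1 * fst X + b2 * snd X)
        - 2 * (- b2 * fst X + b1 * snd X))"
      using quadratic_form_of_rank_one[OF unit null, where x = "fst X" and y = "snd X"] by (simp only: skew)
    finally show ?thesis .
  qed
  ultimately show ?thesis
    using unit
    by (intro that[of b1 b2 "- b2 * (- b2 * m11 + b1 * m21) + b1 * (- b2 * m12 + b1 * m22)"])
      (simp_all only: m11_def m12_def m21_def m22_def)
qed

lemma Hcurv_bound_imp_cone_growth:
  assumes "open \<Omega>" and C2: "C2_on \<Omega> u" and p0: "p0 \<in> sing_set \<Omega> u" and "C > 0" "e > 0"
    and H: "\<forall>p\<in>ball p0 e \<inter> \<Omega>. p \<notin> sing_set \<Omega> u \<longrightarrow> \<bar>Hcurv u p\<bar> \<le> C / dist p p0"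
    and unit: "b1\<^sup>2 + b2\<^sup>2 = 1"
    and hess: "\<And>X. hess_form u p0 X = (b1 * fst X + b2 * snd X) * (\<kappa> * (b1 * fst X + b2 * snd X) - 2 * (- b2 * fst X + b1 * snd X))"
  defines "G \<equiv> \<lambda>q. - b2 * fst (hgrad u q) + b1 * snd (hgrad u q)"
    and "h \<equiv> \<lambda>q. b1 * fst (hgrad u q) + b2 * snd (hgrad u q)"
  obtains \<rho> c where "\<rho> > 0" "c > 0" "ball p0 \<rho> \<subseteq> \<Omega>"
    "\<And>p. p \<in> ball p0 \<rho> \<Longrightarrow> h p \<noteq> 0 \<Longrightarrow> \<bar>G p - (\<kappa> / 2 - 1) * h p\<bar> \<le> 1 / 2 * \<bar>h p\<bar> \<Longrightarrow> c * dist p p0 \<le> \<bar>h p\<bar>"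
proof -
  \<comment> \<open>\<open>t\<close> is chosen so that \<open>\<kappa> * h - 2 * G = 2 * h - 2 * (G - t * h)\<close>, see \<open>cone_bounds\<close>\<close>
  define t where "t = \<kappa> / 2 - 1"
  define k where "k = \<bar>t\<bar> + 3 / 2"
  have "k > 0" by (simp add: k_def add_nonneg_pos)
  have "1 / k\<^sup>2 > 0"
    using \<open>k > 0\<close> by simp
  obtain \<rho> where "\<rho> > 0" "ball p0 \<rho> \<subseteq> \<Omega>"
    and growth: "\<And>p. p \<in> ball p0 \<rho> \<Longrightarrow> hgrad u p \<noteq> 0 \<Longrightarrow>
      1 / k\<^sup>2 * (norm (hgrad u p))\<^sup>2 \<le> \<bar>hess_form u p0 (hgrad u p)\<bar> \<Longrightarrow>
      1 / k\<^sup>2 * dist p p0 \<le> 2 * C * norm (hgrad u p)"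
    using Hcurv_bound_imp_hgrad_growth[OF \<open>open \<Omega>\<close> C2 p0 \<open>1 / k\<^sup>2 > 0\<close> \<open>e > 0\<close> H] by blast
  have "1 / (2 * C * k ^ 3) * dist p p0 \<le> \<bar>h p\<bar>"
    if "p \<in> ball p0 \<rho>" "h p \<noteq> 0" "\<bar>G p - t * h p\<bar> \<le> 1 / 2 * \<bar>h p\<bar>" for p
  proof -
    have cone: "(h p)\<^sup>2 \<le> \<bar>h p * ((2 * t + 2) * h p - 2 * G p)\<bar>" "sqrt ((G p)\<^sup>2 + (h p)\<^sup>2) \<le> k * \<bar>h p\<bar>"
      using cone_bounds[of "G p" t "h p"] that(3) by (simp_all add: k_def)
    have "hgrad u p \<noteq> 0"
      using that(2) by (auto simp: h_def)
    have "norm (hgrad u p) \<le> k * \<bar>h p\<bar>"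
      using cone(2) norm_in_rotated_frame[OF unit, of "hgrad u p"] by (simp add: G_def h_def)
    have "1 / k\<^sup>2 * (norm (hgrad u p))\<^sup>2 \<le> 1 / k\<^sup>2 * (k * \<bar>h p\<bar>)\<^sup>2"
      using \<open>norm (hgrad u p) \<le> k * \<bar>h p\<bar>\<close> by (intro mult_left_mono power_mono) auto
    also have "\<dots> = (h p)\<^sup>2"
      using \<open>k > 0\<close> by (simp add: power_mult_distrib)
    also have "\<dots> \<le> \<bar>hess_form u p0 (hgrad u p)\<bar>"
      using cone(1) by (simp add: hess G_def h_def t_def)
    finally have "1 / k\<^sup>2 * dist p p0 \<le> 2 * C * norm (hgrad u p)"
      using growth[OF that(1) \<open>hgrad u p \<noteq> 0\<close>] by blast
    also have "\<dots> \<le> 2 * C * (k * \<bar>h p\<bar>)"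
      using \<open>norm (hgrad u p) \<le> k * \<bar>h p\<bar>\<close> \<open>C > 0\<close> by simp
    finally show ?thesis
      using \<open>k > 0\<close> \<open>C > 0\<close> by (simp add: field_simps power2_eq_square power3_eq_cube)
  qed
  moreover have "1 / (2 * C * k ^ 3) > 0"
    using \<open>k > 0\<close> \<open>C > 0\<close> by simp
  ultimately show ?thesis
    using that[of \<rho> "1 / (2 * C * k ^ 3)"] \<open>\<rho> > 0\<close> \<open>ball p0 \<rho> \<subseteq> \<Omega>\<close> by (simp add: t_def)
qed

lemma sing_set_locally_level_set:
  assumes "open \<Omega>" and C2: "C2_on \<Omega> u" and p0: "p0 \<in> sing_set \<Omega> u"
    and H: "\<exists>C>0. \<exists>e>0. \<forall>p\<in>ball p0 e \<inter> \<Omega>. p \<notin> sing_set \<Omega> u \<longrightarrow> \<bar>Hcurv u p\<bar> \<le> C / dist p p0"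
    and "detU u p0 = 0"
  obtains a1 a2 R where "R > 0" "ball p0 R \<subseteq> \<Omega>"
    "a1 * px (px u) p0 + a2 * (px (py u) p0 + 1) \<noteq> 0 \<or> a1 * (py (px u) p0 - 1) + a2 * py (py u) p0 \<noteq> 0"
    "\<And>q. q \<in> ball p0 R \<Longrightarrow> q \<in> sing_set \<Omega> u \<longleftrightarrow> a1 * fst (hgrad u q) + a2 * snd (hgrad u q) = 0"
proof -
  obtain C e where "C > 0" "e > 0"
    and H: "\<forall>p\<in>ball p0 e \<inter> \<Omega>. p \<notin> sing_set \<Omega> u \<longrightarrow> \<bar>Hcurv u p\<bar> \<le> C / dist p p0"
    using H by blast
  have "p0 \<in> \<Omega>" "hgrad u p0 = 0"
    using p0 by (auto simp: sing_set_hgrad)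
  obtain b1 b2 \<kappa> where unit: "b1\<^sup>2 + b2\<^sup>2 = 1"
    and gradh: "has_strict_gradient (\<lambda>q. b1 * fst (hgrad u q) + b2 * snd (hgrad u q)) 0 p0"
    and nondegenerate: "- b2 * px (px u) p0 + b1 * (px (py u) p0 + 1) \<noteq> 0 \<or> - b2 * (py (px u) p0 - 1) + b1 * py (py u) p0 \<noteq> 0"
    and hess: "\<And>X. hess_form u p0 X = (b1 * fst X + b2 * snd X) * (\<kappa> * (b1 * fst X + b2 * snd X) - 2 * (- b2 * fst X + b1 * snd X))"
    using degenerate_sing_point_frame[OF \<open>open \<Omega>\<close> C2 \<open>p0 \<in> \<Omega>\<close> \<open>detU u p0 = 0\<close>] by blast
  define G where "G = (\<lambda>q. - b2 * fst (hgrad u q) + b1 * snd (hgrad u q))"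
  define h where "h = (\<lambda>q. b1 * fst (hgrad u q) + b2 * snd (hgrad u q))"
  define w where "w = (- b2 * px (px u) p0 + b1 * (px (py u) p0 + 1), - b2 * (py (px u) p0 - 1) + b1 * py (py u) p0)"
  have gradG: "has_strict_gradient G w p0"
    using has_continuous_partials_imp_strict_gradient[OF \<open>open \<Omega>\<close> hgrad_lincomb_partials[OF C2] \<open>p0 \<in> \<Omega>\<close>, of "- b2" b1]
    by (simp add: G_def w_def)
  have "w \<noteq> 0"
    using nondegenerate by (auto simp: w_def zero_prod_def)
  obtain \<rho> c where "\<rho> > 0" "c > 0" "ball p0 \<rho> \<subseteq> \<Omega>"
    and cone_growth: "\<And>p. p \<in> ball p0 \<rho> \<Longrightarrow> h p \<noteq> 0 \<Longrightarrow> \<bar>G p - (\<kappa> / 2 - 1) * h p\<bar> \<le> 1 / 2 * \<bar>h p\<bar> \<Longrightarrow>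
      c * dist p p0 \<le> \<bar>h p\<bar>"
    using Hcurv_bound_imp_cone_growth[OF \<open>open \<Omega>\<close> C2 p0 \<open>C > 0\<close> \<open>e > 0\<close> H unit hess]
    unfolding G_def h_def by blast
  have "has_strict_gradient h 0 p0"
    using gradh by (simp add: h_def)
  moreover have "G p0 = 0" "h p0 = 0"
    using \<open>hgrad u p0 = 0\<close> by (simp_all add: G_def h_def)
  moreover have "(1 / 2 :: real) > 0"
    by simp
  ultimately obtain R0 where "R0 > 0" and flat: "\<And>q. q \<in> ball p0 R0 \<Longrightarrow> G q = 0 \<Longrightarrow> h q = 0"
    using strict_gradient_flat_factor_vanishes[OF gradG _ _ _ \<open>w \<noteq> 0\<close> _ \<open>c > 0\<close> \<open>\<rho> > 0\<close> cone_growth] by blast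
  show ?thesis
  proof (rule that[of "min R0 \<rho>" "- b2" b1])
    show "min R0 \<rho> > 0" "ball p0 (min R0 \<rho>) \<subseteq> \<Omega>"
      using \<open>R0 > 0\<close> \<open>\<rho> > 0\<close> \<open>ball p0 \<rho> \<subseteq> \<Omega>\<close> by auto
    show "- b2 * px (px u) p0 + b1 * (px (py u) p0 + 1) \<noteq> 0 \<or> - b2 * (py (px u) p0 - 1) + b1 * py (py u) p0 \<noteq> 0"
      by (fact nondegenerate)
    fix q assume q: "q \<in> ball p0 (min R0 \<rho>)"
    then have "q \<in> \<Omega>" using \<open>ball p0 \<rho> \<subseteq> \<Omega>\<close> by auto
    have "hgrad u q = 0" if "G q = 0"
      using flat[OF _ that] q norm_in_rotated_frame[OF unit, of "hgrad u q"] \<open>G q = 0\<close> by (simp add: G_def h_def)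
    then show "q \<in> sing_set \<Omega> u \<longleftrightarrow> - b2 * fst (hgrad u q) + b1 * snd (hgrad u q) = 0"
      using \<open>q \<in> \<Omega>\<close> by (auto simp: sing_set_hgrad G_def)
  qed
qed

lemma sing_set_locally_C1_curve:
  assumes "open \<Omega>" and C2: "C2_on \<Omega> u" and p0: "p0 \<in> sing_set \<Omega> u"
    and H: "\<exists>C>0. \<exists>e>0. \<forall>p\<in>ball p0 e \<inter> \<Omega>. p \<notin> sing_set \<Omega> u \<longrightarrow> \<bar>Hcurv u p\<bar> \<le> C / dist p p0"
    and "detU u p0 = 0"
  shows "\<exists>W. open W \<and> p0 \<in> W \<and> W \<subseteq> \<Omega> \<and>
    (\<exists>\<gamma> a b. C1_curve \<gamma> a b \<and> p0 \<in> \<gamma> ` {a<..<b} \<and> W \<inter> sing_set \<Omega> u = \<gamma> ` {a<..<b})"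
proof -
  obtain a1 a2 R where "R > 0" "ball p0 R \<subseteq> \<Omega>"
    and nondegenerate: "a1 * px (px u) p0 + a2 * (px (py u) p0 + 1) \<noteq> 0 \<or> a1 * (py (px u) p0 - 1) + a2 * py (py u) p0 \<noteq> 0"
    and level: "\<And>q. q \<in> ball p0 R \<Longrightarrow> q \<in> sing_set \<Omega> u \<longleftrightarrow> a1 * fst (hgrad u q) + a2 * snd (hgrad u q) = 0"
    by (rule sing_set_locally_level_set[OF assms]) (rule that)
  have zero: "a1 * fst (hgrad u p0) + a2 * snd (hgrad u p0) = 0"
    using p0 by (simp add: sing_set_hgrad)
  obtain W \<gamma> a b where "open W" "p0 \<in> W" "W \<subseteq> ball p0 R" "C1_curve \<gamma> a b" "p0 \<in> \<gamma> ` {a<..<b}"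
    and curve: "W \<inter> {q. a1 * fst (hgrad u q) + a2 * snd (hgrad u q) = 0} = \<gamma> ` {a<..<b}"
    by (rule zero_set_locally_C1_curve[OF open_ball centre_in_ball[THEN iffD2, OF \<open>R > 0\<close>] zero nondegenerate
        has_continuous_partials_subset[OF hgrad_lincomb_partials[OF C2] \<open>ball p0 R \<subseteq> \<Omega>\<close>]])
      (rule that)
  have "q \<in> sing_set \<Omega> u \<longleftrightarrow> a1 * fst (hgrad u q) + a2 * snd (hgrad u q) = 0" if "q \<in> W" for q
    using level[of q] \<open>W \<subseteq> ball p0 R\<close> that by blast
  then have "W \<inter> sing_set \<Omega> u = \<gamma> ` {a<..<b}"
    unfolding curve[symmetric] by auto
  moreover have "W \<subseteq> \<Omega>"
    using \<open>W \<subseteq> ball p0 R\<close> \<open>ball p0 R \<subseteq> \<Omega>\<close> by blast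
  ultimately show ?thesis
    using \<open>open W\<close> \<open>p0 \<in> W\<close> \<open>C1_curve \<gamma> a b\<close> \<open>p0 \<in> \<gamma> ` {a<..<b}\<close> by blast
qed

theorem theorem3p3:
  fixes \<Omega> :: "(real \<times> real) set" and u :: "real \<times> real \<Rightarrow> real" and p0 :: "real \<times> real"
  assumes "open \<Omega>" and "connected \<Omega>"
    and "C2_on \<Omega> u"
    and "p0 \<in> sing_set \<Omega> u"
    and "\<exists>C>0. \<exists>e>0. \<forall>p\<in>ball p0 e \<inter> \<Omega>. p \<notin> sing_set \<Omega> u \<longrightarrow>
            \<bar>Hcurv u p\<bar> \<le> C / dist p p0"
  shows "(p0 islimpt sing_set \<Omega> u \<longleftrightarrow> detU u p0 = 0) \<and>
         (detU u p0 = 0 \<longleftrightarrow>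
            (\<exists>W. open W \<and> p0 \<in> W \<and> W \<subseteq> \<Omega> \<and>
               (\<exists>\<gamma> a b. C1_curve \<gamma> a b \<and> p0 \<in> \<gamma> ` {a<..<b} \<and>
                   W \<inter> sing_set \<Omega> u = \<gamma> ` {a<..<b})))"
proof -
  let ?curve = "\<exists>W. open W \<and> p0 \<in> W \<and> W \<subseteq> \<Omega> \<and>
    (\<exists>\<gamma> a b. C1_curve \<gamma> a b \<and> p0 \<in> \<gamma> ` {a<..<b} \<and> W \<inter> sing_set \<Omega> u = \<gamma> ` {a<..<b})"
  have "detU u p0 \<noteq> 0 \<Longrightarrow> \<not> p0 islimpt sing_set \<Omega> u"
    using sing_set_not_islimpt[OF assms(1,3,4)] .
  moreover have "detU u p0 = 0 \<Longrightarrow> ?curve"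
    using sing_set_locally_C1_curve[OF assms(1,3-5)] .
  moreover have "p0 islimpt sing_set \<Omega> u" if ?curve
  proof -
    obtain W \<gamma> a b where "C1_curve \<gamma> a b" "p0 \<in> \<gamma> ` {a<..<b}" "W \<inter> sing_set \<Omega> u = \<gamma> ` {a<..<b}"
      using \<open>?curve\<close> by blast
    then show ?thesis
      using C1_curve_islimpt_image[of \<gamma> a b] islimpt_subset[of p0 "\<gamma> ` {a<..<b}" "sing_set \<Omega> u"] by blast
  qed
  ultimately show ?thesis
    by blast
qed

end
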